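(* Consider the delayed linear system of the context under assumptions (a1)–(a3). The system globally synchronizes with synchronized state \[ \omega^\star=\frac{\sum_{i=1}^N\gamma_i c_i g_i(y_i)}{\sum_{i=1}^N\gamma_i c_i+K\sum_{i=1}^N\sum_{j\in\mathcal N_i}\gamma_i a_{ij}\tau_{ij}} \] with all $\gamma_i>0$ if and only if $\mathscr G$ is strongly connected. Moreover, the synchronized state equals \[ \dot x_q^\star=\frac{\sum_{i=1}^N c_i g_i(y_i)}{\sum_{i=1}^N c_i+K\sum_{i=1}^N\sum_{j\in\mathcal N_i}a_{ij}\tau_{ij}},\qquad q=1,\dots,N, \] if and only if, in addition, $\mathscr G$ is balanced.
   Context: System: $\dot x_i(t)=g_i(y_i)+\frac{K}{c_i}\sum_{j\in\mathcal N_i}a_{ij}(x_j(t-\tau_{ij})-x_i(t))$ for $t>0$, $x_i(t)=\phi_i(t)$ for $t\in[-\tau,0]$, $i=1,\dots,N$; here $y_i\in\mathbb R$, $g_i:\mathbb R\to\mathbb R$, $a_{ij}\ge0$ for $i\ne j$ (possibly $a_{ij}\neq a_{ji}$), $\mathcal N_i=\{j\ne i:a_{ij}\ne0\}$. Assumptions: (a1) $K>0$, $c_i>0$; (a2) delays $0\le\tau_{ij}\le\tau:=\max_{i\neq j}\tau_{ij}<\infty$; (a3) $\phi_i$ continuous and bounded on $[-\tau,0]$. Digraph $\mathscr G$: vertices $\{1,\dots,N\}$, edge from $j$ to $i$ with weight $a_{ij}$ whenever $a_{ij}>0$. Adjacency $[\mathbf A]_{ij}=a_{ij}$, $\mathbf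 D=\mathrm{diag}(\sum_j a_{ij})_i$, Laplacian $\mathbf L=\mathbf D-\mathbf A$; $\boldsymbol\gamma$ is a left eigenvector of $\mathbf L$ for eigenvalue $0$ ($\boldsymbol\gamma^T\mathbf L=0$), with $\|\boldsymbol\gamma\|=1$ and nonnegative entries. $\mathscr G$ is strongly connected if every ordered pair of distinct nodes is joined by a directed path; $\mathscr G$ is balanced if $\sum_j a_{ij}=\sum_j a_{ji}$ for every node $i$. Global synchronization: there is a constant $\omega^\star$ and a solution with $\dot x_i^\star\equiv\omega^\star$ for all $i$, and for every admissible initial condition every solution satisfies $\dot x_i(t)\to\omega^\star$ as $t\to\infty$ for all $i$. *)

theory Defs
  imports "HOL-Analysis.Analysis"
begin

definition nodes :: "nat \<Rightarrow> nat set" where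
  "nodes N = {1..N}"

definition nbhd :: "nat \<Rightarrow> (nat \<Rightarrow> nat \<Rightarrow> real) \<Rightarrow> nat \<Rightarrow> nat set" where
  "nbhd N a i = {j \<in> nodes N. j \<noteq> i \<and> a i j \<noteq> 0}"

definition laplacian :: "nat \<Rightarrow> (nat \<Rightarrow> nat \<Rightarrow> real) \<Rightarrow> nat \<Rightarrow> nat \<Rightarrow> real" where
  "laplacian N a i j = (if i = j then (\<Sum>k\<in>nodes N. a i k) else 0) - a i j"

definition edges :: "nat \<Rightarrow> (nat \<Rightarrow> nat \<Rightarrow> real) \<Rightarrow> (nat \<times> nat) set" where
  "edges N a = {(j, i). i \<in> nodes N \<and> j \<in> nodes N \<and> i \<noteq> j \<and> a i j > 0}"

definition strongly_connected :: "nat \<Rightarrow> (nat \<Rightarrow> nat \<Rightarrow> real) \<Rightarrow> bool" where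
  "strongly_connected N a \<longleftrightarrow>
     (\<forall>i\<in>nodes N. \<forall>j\<in>nodes N. i \<noteq> j \<longrightarrow> (i, j) \<in> (edges N a)\<^sup>+)"

definition balanced :: "nat \<Rightarrow> (nat \<Rightarrow> nat \<Rightarrow> real) \<Rightarrow> bool" where
  "balanced N a \<longleftrightarrow> (\<forall>i\<in>nodes N. (\<Sum>j\<in>nodes N. a i j) = (\<Sum>j\<in>nodes N. a j i))"

definition max_delay :: "nat \<Rightarrow> (nat \<Rightarrow> nat \<Rightarrow> real) \<Rightarrow> real" where
  "max_delay N tau = Max (insert 0 {tau i j | i j. i \<in> nodes N \<and> j \<in> nodes N \<and> i \<noteq> j})"

definition admissible_init ::
  "nat \<Rightarrow> (nat \<Rightarrow> nat \<Rightarrow> real) \<Rightarrow> (nat \<Rightarrow> real \<Rightarrow> real) \<Rightarrow> bool" where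
  "admissible_init N tau \<phi> \<longleftrightarrow>
     (\<forall>i\<in>nodes N. continuous_on {- max_delay N tau..0} (\<phi> i)
                  \<and> bounded (\<phi> i ` {- max_delay N tau..0}))"

definition is_solution ::
  "nat \<Rightarrow> real \<Rightarrow> (nat \<Rightarrow> real) \<Rightarrow> (nat \<Rightarrow> nat \<Rightarrow> real) \<Rightarrow> (nat \<Rightarrow> nat \<Rightarrow> real)
   \<Rightarrow> (nat \<Rightarrow> real \<Rightarrow> real) \<Rightarrow> (nat \<Rightarrow> real)
   \<Rightarrow> (nat \<Rightarrow> real \<Rightarrow> real) \<Rightarrow> (nat \<Rightarrow> real \<Rightarrow> real) \<Rightarrow> bool" where
  "is_solution N K c a tau g y \<phi> x \<longleftrightarrow>
     (\<forall>i\<in>nodes N.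
        (\<forall>t\<in>{- max_delay N tau..0}. x i t = \<phi> i t)
      \<and> continuous_on {- max_delay N tau..} (x i)
      \<and> (\<forall>t>0. (x i has_real_derivative
              (g i (y i) + K / c i * (\<Sum>j\<in>nbhd N a i. a i j * (x j (t - tau i j) - x i t))))
              (at t)))"

definition globally_synchronizes_with ::
  "nat \<Rightarrow> real \<Rightarrow> (nat \<Rightarrow> real) \<Rightarrow> (nat \<Rightarrow> nat \<Rightarrow> real) \<Rightarrow> (nat \<Rightarrow> nat \<Rightarrow> real)
   \<Rightarrow> (nat \<Rightarrow> real \<Rightarrow> real) \<Rightarrow> (nat \<Rightarrow> real) \<Rightarrow> real \<Rightarrow> bool" where
  "globally_synchronizes_with N K c a tau g y \<omega> \<longleftrightarrow>
     (\<exists>\<phi> x. admissible_init N tau \<phi> \<and> is_solution N K c a tau g y \<phi> x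
            \<and> (\<forall>i\<in>nodes N. \<forall>t>0. (x i has_real_derivative \<omega>) (at t)))
   \<and> (\<forall>\<phi> x. admissible_init N tau \<phi> \<and> is_solution N K c a tau g y \<phi> x \<longrightarrow>
            (\<forall>i\<in>nodes N. ((\<lambda>t. deriv (x i) t) \<longlongrightarrow> \<omega>) at_top))"

definition omega_gamma ::
  "nat \<Rightarrow> real \<Rightarrow> (nat \<Rightarrow> real) \<Rightarrow> (nat \<Rightarrow> nat \<Rightarrow> real) \<Rightarrow> (nat \<Rightarrow> nat \<Rightarrow> real)
   \<Rightarrow> (nat \<Rightarrow> real \<Rightarrow> real) \<Rightarrow> (nat \<Rightarrow> real) \<Rightarrow> (nat \<Rightarrow> real) \<Rightarrow> real" where
  "omega_gamma N K c a tau g y \<gamma> =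
     (\<Sum>i\<in>nodes N. \<gamma> i * c i * g i (y i)) /
     ((\<Sum>i\<in>nodes N. \<gamma> i * c i) + K * (\<Sum>i\<in>nodes N. \<Sum>j\<in>nbhd N a i. \<gamma> i * a i j * tau i j))"

definition omega_bal ::
  "nat \<Rightarrow> real \<Rightarrow> (nat \<Rightarrow> real) \<Rightarrow> (nat \<Rightarrow> nat \<Rightarrow> real) \<Rightarrow> (nat \<Rightarrow> nat \<Rightarrow> real)
   \<Rightarrow> (nat \<Rightarrow> real \<Rightarrow> real) \<Rightarrow> (nat \<Rightarrow> real) \<Rightarrow> real" where
  "omega_bal N K c a tau g y =
     (\<Sum>i\<in>nodes N. c i * g i (y i)) /
     ((\<Sum>i\<in>nodes N. c i) + K * (\<Sum>i\<in>nodes N. \<Sum>j\<in>nbhd N a i. a i j * tau i j))"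

end

(*
  Subtracting an affine solution x_i(t) = \<omega> t + b_i turns the system into the delayed consensus
  flow e_i' = K/c_i \<Sum>_j a_ij (e_j(t - \<tau>_ij) - e_i(t)).  For this flow the maximum over a delay
  window never increases, and a gap below the maximum at one node is passed along every edge with a
  controlled loss.  On a strongly connected graph the oscillation therefore shrinks by a fixed
  factor over a fixed time, so all coupling terms tend to 0.  An affine solution of frequency \<omega>
  exists iff the Laplacian system L b = r(\<omega>) is solvable, i.e. iff r(\<omega>) is orthogonal to the
  positive left null vector \<gamma>; this singles out \<omega>*.  Without strong connectivity, the nodes that
  reach a fixed node form a block without incoming edges, which \<gamma> also decouples from the rest;
  driving the block and its complement differently then forces two different frequencies.
  Finally, \<omega>* is the unweighted average for all inputs iff \<gamma> is constant, i.e. iff the graph is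
  balanced.
*)

theory Submission
  imports Defs "Jordan_Normal_Form.Determinant"
begin

lemma finite_nodes [simp]: "finite (nodes N)"
  unfolding nodes_def by simp

lemma finite_nbhd [simp]: "finite (nbhd N a i)"
  unfolding nbhd_def by simp

lemma finite_edges [simp]: "finite (edges N a)"
proof -
  have "edges N a \<subseteq> nodes N \<times> nodes N"
    unfolding edges_def by auto
  thus ?thesis by (rule finite_subset) simp
qed

lemma nbhdD: "j \<in> nbhd N a i \<Longrightarrow> j \<in> nodes N \<and> j \<noteq> i"
  unfolding nbhd_def by auto

lemma edgesD: "(j, i) \<in> edges N a \<Longrightarrow> i \<in> nodes N \<and> j \<in> nodes N \<and> i \<noteq> j \<and> a i j > 0 \<and> j \<in> nbhd N a i"
  unfolding edges_def nbhd_def by auto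

lemma sum_nbhd_eq: "(\<Sum>j\<in>nbhd N a i. a i j * f j) = (\<Sum>j\<in>nodes N - {i}. a i j * f j)"
  by (rule sum.mono_neutral_left) (auto simp: nbhd_def)

lemma finite_delays: "finite {tau i j | i j. i \<in> nodes N \<and> j \<in> nodes N \<and> i \<noteq> j}"
proof -
  have "{tau i j | i j. i \<in> nodes N \<and> j \<in> nodes N \<and> i \<noteq> j} \<subseteq> case_prod tau ` (nodes N \<times> nodes N)"
    by auto
  thus ?thesis by (rule finite_subset) simp
qed

lemma max_delay_ge: "i \<in> nodes N \<Longrightarrow> j \<in> nodes N \<Longrightarrow> i \<noteq> j \<Longrightarrow> tau i j \<le> max_delay N tau"
  unfolding max_delay_def using finite_delays by (intro Max_ge) auto

lemma max_delay_nonneg: "max_delay N tau \<ge> 0"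
  unfolding max_delay_def using finite_delays by (intro Max_ge) auto

lemma strongly_connected_path:
  assumes sc: "strongly_connected N a" and i0: "i0 \<in> nodes N" and i: "i \<in> nodes N"
  obtains k where "k \<le> card (edges N a)" "(i0, i) \<in> edges N a ^^ k"
proof (cases "i = i0")
  case True
  thus ?thesis using that[of 0] by simp
next
  case False
  hence "(i0, i) \<in> (edges N a)\<^sup>+" using sc i0 i unfolding strongly_connected_def by auto
  thus ?thesis using that trancl_finite_eq_relpow[OF finite_edges[of N a]] by auto
qed

lemma closed_set_if_not_strongly_connected:
  assumes "\<not> strongly_connected N a"
    and a_nonneg: "\<forall>i\<in>nodes N. \<forall>j\<in>nodes N. i \<noteq> j \<longrightarrow> a i j \<ge> 0"
  obtains S where "S \<subseteq> nodes N" "S \<noteq> {}" "S \<noteq> nodes N" "\<forall>i\<in>S. \<forall>j\<in>nodes N - S. a i j = 0"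
proof -
  obtain i0 j0 where ij: "i0 \<in> nodes N" "j0 \<in> nodes N" "i0 \<noteq> j0" "(i0, j0) \<notin> (edges N a)\<^sup>+"
    using assms(1) unfolding strongly_connected_def by blast
  define S where "S = {k \<in> nodes N. (k, j0) \<in> (edges N a)\<^sup>*}"
  have S: "S \<subseteq> nodes N" unfolding S_def by blast
  have j0: "j0 \<in> S" unfolding S_def using ij(2) by simp
  have i0: "i0 \<notin> S" unfolding S_def using ij(3,4) by (simp add: rtrancl_eq_or_trancl)
  have "a i j = 0" if i: "i \<in> S" and j: "j \<in> nodes N - S" for i j
  proof (rule ccontr)
    assume nonzero: "a i j \<noteq> 0"
    have ij': "i \<noteq> j" "i \<in> nodes N" "j \<in> nodes N" using i j S by auto
    hence "0 < a i j" using a_nonneg nonzero by (simp add: order_less_le)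
    hence "(j, i) \<in> edges N a" using ij' unfolding edges_def by simp
    moreover have "(i, j0) \<in> (edges N a)\<^sup>*" using i unfolding S_def by simp
    ultimately have "(j, j0) \<in> (edges N a)\<^sup>*" by (rule converse_rtrancl_into_rtrancl)
    thus False using j unfolding S_def by simp
  qed
  hence closed: "\<forall>i\<in>S. \<forall>j\<in>nodes N - S. a i j = 0" by blast
  have "S \<noteq> {}" "S \<noteq> nodes N" using j0 i0 ij(1) by auto
  thus ?thesis using that[OF S _ _ closed] by blast
qed

section \<open>Left null vectors of the Laplacian\<close>

definition laplacian_left_null :: "nat \<Rightarrow> (nat \<Rightarrow> nat \<Rightarrow> real) \<Rightarrow> (nat \<Rightarrow> real) \<Rightarrow> bool" where
  "laplacian_left_null N a v \<longleftrightarrow> (\<forall>j\<in>nodes N. (\<Sum>i\<in>nodes N. v i * laplacian N a i j) = 0)"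

lemma laplacian_mult_vec:
  assumes i: "i \<in> nodes N"
  shows "(\<Sum>j\<in>nodes N. laplacian N a i j * f j) = (\<Sum>j\<in>nbhd N a i. a i j * (f i - f j))"
proof -
  have "(\<Sum>j\<in>nodes N. laplacian N a i j * f j)
      = (\<Sum>j\<in>nodes N. (if i = j then (\<Sum>k\<in>nodes N. a i k) * f j else 0) - a i j * f j)"
    by (rule sum.cong) (auto simp: laplacian_def algebra_simps)
  also have "\<dots> = (\<Sum>k\<in>nodes N. a i k) * f i - (\<Sum>j\<in>nodes N. a i j * f j)"
    using i by (simp add: sum_subtractf)
  also have "\<dots> = (\<Sum>j\<in>nodes N. a i j * (f i - f j))"
    by (simp add: sum_distrib_left sum_distrib_right right_diff_distrib sum_subtractf mult.commute)
  also have "\<dots> = (\<Sum>j\<in>nodes N - {i}. a i j * (f i - f j))"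
    by (rule sum.mono_neutral_right) auto
  finally show ?thesis using sum_nbhd_eq[where f = "\<lambda>j. f i - f j"] by simp
qed

lemma laplacian_row_sum: "i \<in> nodes N \<Longrightarrow> (\<Sum>j\<in>nodes N. laplacian N a i j) = 0"
  using laplacian_mult_vec[of i N a "\<lambda>_. 1"] by simp

lemma vec_mult_laplacian:
  assumes j: "j \<in> nodes N"
  shows "(\<Sum>i\<in>nodes N. v i * laplacian N a i j) = v j * (\<Sum>k\<in>nodes N. a j k) - (\<Sum>i\<in>nodes N. v i * a i j)"
proof -
  have "(\<Sum>i\<in>nodes N. v i * laplacian N a i j)
      = (\<Sum>i\<in>nodes N. (if i = j then v j * (\<Sum>k\<in>nodes N. a j k) else 0) - v i * a i j)"
    by (rule sum.cong) (auto simp: laplacian_def algebra_simps)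
  thus ?thesis using j by (simp add: sum_subtractf)
qed

lemma sum_vec_mult_laplacian_mult_vec:
  "(\<Sum>i\<in>nodes N. v i * (\<Sum>j\<in>nodes N. laplacian N a i j * b j))
     = (\<Sum>j\<in>nodes N. b j * (\<Sum>i\<in>nodes N. v i * laplacian N a i j))"
proof -
  have "(\<Sum>i\<in>nodes N. v i * (\<Sum>j\<in>nodes N. laplacian N a i j * b j))
      = (\<Sum>i\<in>nodes N. \<Sum>j\<in>nodes N. b j * (v i * laplacian N a i j))"
    by (simp add: sum_distrib_left mult_ac)
  also have "\<dots> = (\<Sum>j\<in>nodes N. \<Sum>i\<in>nodes N. b j * (v i * laplacian N a i j))"
    by (rule sum.swap)
  finally show ?thesis by (simp add: sum_distrib_left)
qed

lemma laplacian_left_null_diff: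
  "laplacian_left_null N a u \<Longrightarrow> laplacian_left_null N a v \<Longrightarrow> laplacian_left_null N a (\<lambda>i. u i - s * v i)"
  unfolding laplacian_left_null_def
  by (simp add: left_diff_distrib sum_subtractf sum_distrib_left[symmetric] mult.assoc)

lemma laplacian_left_null_zero_step:
  assumes null: "laplacian_left_null N a v" and v_nonneg: "\<forall>i\<in>nodes N. v i \<ge> 0"
    and a_nonneg: "\<forall>i\<in>nodes N. \<forall>j\<in>nodes N. i \<noteq> j \<longrightarrow> a i j \<ge> 0"
    and z: "z \<in> nodes N" "v z = 0" and edge: "(z, y) \<in> edges N a"
  shows "v y = 0"
proof -
  have "(\<Sum>i\<in>nodes N. v i * a i z) = 0"
    using null z vec_mult_laplacian[of z N v a] unfolding laplacian_left_null_def by simp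
  moreover have "\<forall>i\<in>nodes N. v i * a i z \<ge> 0"
    using v_nonneg a_nonneg z by (metis mult_eq_0_iff mult_nonneg_nonneg)
  ultimately have "\<forall>i\<in>nodes N. v i * a i z = 0"
    by (subst (asm) sum_nonneg_eq_0_iff) auto
  thus ?thesis using edgesD[OF edge] by force
qed

lemma laplacian_left_null_pos:
  assumes sc: "strongly_connected N a" and null: "laplacian_left_null N a v"
    and v_nonneg: "\<forall>i\<in>nodes N. v i \<ge> 0"
    and a_nonneg: "\<forall>i\<in>nodes N. \<forall>j\<in>nodes N. i \<noteq> j \<longrightarrow> a i j \<ge> 0"
    and p: "p \<in> nodes N" "v p > 0"
  shows "\<forall>i\<in>nodes N. v i > 0"
proof (rule ccontr)
  assume "\<not> (\<forall>i\<in>nodes N. v i > 0)"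
  then obtain z where z: "z \<in> nodes N" "v z = 0"
    using v_nonneg by force
  have "v y = 0" if "(z, y) \<in> (edges N a)\<^sup>+" for y
    using that
  proof (induction rule: trancl_induct)
    case (base y)
    show ?case by (rule laplacian_left_null_zero_step[OF null v_nonneg a_nonneg z base])
  next
    case (step y u)
    show ?case
      by (rule laplacian_left_null_zero_step[OF null v_nonneg a_nonneg _ step.IH step.hyps(2)])
        (use edgesD[OF step.hyps(2)] in simp)
  qed
  moreover have "(z, p) \<in> (edges N a)\<^sup>+"
    using sc z p unfolding strongly_connected_def by force
  ultimately show False using p by simp
qed

lemma laplacian_left_null_proportional:
  assumes sc: "strongly_connected N a" and null_v: "laplacian_left_null N a v"
    and null_g: "laplacian_left_null N a g" and g_pos: "\<forall>i\<in>nodes N. g i > 0"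
    and a_nonneg: "\<forall>i\<in>nodes N. \<forall>j\<in>nodes N. i \<noteq> j \<longrightarrow> a i j \<ge> 0"
    and ne: "nodes N \<noteq> {}"
  shows "\<exists>s. \<forall>i\<in>nodes N. v i = s * g i"
proof -
  define s where "s = Min ((\<lambda>i. v i / g i) ` nodes N)"
  have "s \<in> (\<lambda>i. v i / g i) ` nodes N"
    unfolding s_def using ne by (intro Min_in) auto
  then obtain z where z: "z \<in> nodes N" "s = v z / g z" by auto
  define u where "u i = v i - s * g i" for i
  have null_u: "laplacian_left_null N a u"
    unfolding u_def by (rule laplacian_left_null_diff[OF null_v null_g])
  have u_nonneg: "\<forall>i\<in>nodes N. u i \<ge> 0"
  proof
    fix i assume i: "i \<in> nodes N"
    have "s \<le> v i / g i" unfolding s_def using i by (intro Min_le) auto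
    thus "u i \<ge> 0" unfolding u_def using g_pos i by (simp add: pos_le_divide_eq)
  qed
  have "u z = 0" unfolding u_def z(2) using g_pos z(1) by force
  hence "\<forall>i\<in>nodes N. u i = 0"
    using laplacian_left_null_pos[OF sc null_u u_nonneg a_nonneg] u_nonneg z(1)
    by (metis order.not_eq_order_implies_strict less_irrefl)
  thus ?thesis unfolding u_def by auto
qed

lemma laplacian_left_null_inflow_zero:
  assumes S: "S \<subseteq> nodes N" and closed: "\<forall>i\<in>S. \<forall>j\<in>nodes N - S. a i j = 0"
    and null: "laplacian_left_null N a v"
  shows "(\<Sum>j\<in>S. \<Sum>i\<in>nodes N - S. v i * a i j) = 0"
proof -
  have row: "(\<Sum>j\<in>S. laplacian N a i j) = 0" if i: "i \<in> S" for i
  proof -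
    have "(\<Sum>j\<in>S. laplacian N a i j) = (\<Sum>j\<in>nodes N. laplacian N a i j)"
      using i S closed by (intro sum.mono_neutral_left) (auto simp: laplacian_def)
    thus ?thesis using i S laplacian_row_sum by auto
  qed
  have col: "(\<Sum>i\<in>nodes N. v i * laplacian N a i j)
      = (\<Sum>i\<in>S. v i * laplacian N a i j) - (\<Sum>i\<in>nodes N - S. v i * a i j)" if j: "j \<in> S" for j
  proof -
    have "(\<Sum>i\<in>nodes N - S. v i * laplacian N a i j) = (\<Sum>i\<in>nodes N - S. - (v i * a i j))"
      using j by (intro sum.cong) (auto simp: laplacian_def)
    thus ?thesis using S by (simp add: sum.subset_diff[OF S] sum_negf)
  qed
  have "(\<Sum>j\<in>S. \<Sum>i\<in>S. v i * laplacian N a i j) = (\<Sum>i\<in>S. \<Sum>j\<in>S. v i * laplacian N a i j)"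
    by (rule sum.swap)
  also have "\<dots> = (\<Sum>i\<in>S. v i * (\<Sum>j\<in>S. laplacian N a i j))"
    by (simp add: sum_distrib_left)
  also have "\<dots> = 0" using row by simp
  finally have inner: "(\<Sum>j\<in>S. \<Sum>i\<in>S. v i * laplacian N a i j) = 0" .
  have "(\<Sum>j\<in>S. \<Sum>i\<in>nodes N. v i * laplacian N a i j) = 0"
    using null S unfolding laplacian_left_null_def by (auto intro: sum.neutral)
  thus ?thesis using inner col by (simp add: sum_subtractf)
qed

lemma laplacian_left_null_closed_set:
  assumes S: "S \<subseteq> nodes N" and closed: "\<forall>i\<in>S. \<forall>j\<in>nodes N - S. a i j = 0"
    and null: "laplacian_left_null N a v" and v_pos: "\<forall>i\<in>nodes N. v i > 0"
    and a_nonneg: "\<forall>i\<in>nodes N. \<forall>j\<in>nodes N. i \<noteq> j \<longrightarrow> a i j \<ge> 0"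
  shows "\<forall>i\<in>nodes N - S. \<forall>j\<in>S. a i j = 0"
proof (intro ballI)
  fix i j assume i: "i \<in> nodes N - S" and j: "j \<in> S"
  have nonneg: "0 \<le> v k * a k l" if "k \<in> nodes N - S" "l \<in> S" for k l
    using v_pos a_nonneg S that by (metis DiffD1 DiffD2 in_mono less_imp_le mult_nonneg_nonneg)
  have "finite S" using S by (rule finite_subset) simp
  hence "\<forall>l\<in>S. (\<Sum>k\<in>nodes N - S. v k * a k l) = 0"
    using laplacian_left_null_inflow_zero[OF S closed null] nonneg
    by (subst (asm) sum_nonneg_eq_0_iff) (auto intro!: sum_nonneg)
  hence "(\<Sum>k\<in>nodes N - S. v k * a k j) = 0" using j by blast
  hence "v i * a i j = 0" using nonneg i j by (subst (asm) sum_nonneg_eq_0_iff) auto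
  thus "a i j = 0" using v_pos i by force
qed

lemma balanced_iff_laplacian_left_null_one: "balanced N a \<longleftrightarrow> laplacian_left_null N a (\<lambda>_. 1)"
  unfolding balanced_def laplacian_left_null_def using vec_mult_laplacian[of _ N "\<lambda>_. 1" a] by simp

lemma laplacian_left_null_block_sum:
  assumes Q: "Q \<subseteq> nodes N" and null: "laplacian_left_null N a v"
    and out: "\<forall>i\<in>Q. \<forall>j\<in>nodes N - Q. a i j = 0" and into: "\<forall>i\<in>nodes N - Q. \<forall>j\<in>Q. a i j = 0"
  shows "(\<Sum>i\<in>Q. v i * (\<Sum>j\<in>nbhd N a i. a i j * (b i - b j))) = 0"
proof -
  have row: "(\<Sum>j\<in>nbhd N a i. a i j * (b i - b j)) = (\<Sum>j\<in>Q. laplacian N a i j * b j)" if i: "i \<in> Q" for i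
  proof -
    have "(\<Sum>j\<in>Q. laplacian N a i j * b j) = (\<Sum>j\<in>nodes N. laplacian N a i j * b j)"
      using i Q out by (intro sum.mono_neutral_left) (auto simp: laplacian_def)
    thus ?thesis using laplacian_mult_vec[of i N a b] i Q by auto
  qed
  have col: "(\<Sum>i\<in>Q. v i * laplacian N a i j) = 0" if j: "j \<in> Q" for j
  proof -
    have "(\<Sum>i\<in>Q. v i * laplacian N a i j) = (\<Sum>i\<in>nodes N. v i * laplacian N a i j)"
      using j Q into by (intro sum.mono_neutral_left) (auto simp: laplacian_def)
    thus ?thesis using null j Q unfolding laplacian_left_null_def by auto
  qed
  have "(\<Sum>i\<in>Q. v i * (\<Sum>j\<in>nbhd N a i. a i j * (b i - b j)))
      = (\<Sum>i\<in>Q. \<Sum>j\<in>Q. b j * (v i * laplacian N a i j))"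
    using row by (simp add: sum_distrib_left mult_ac)
  also have "\<dots> = (\<Sum>j\<in>Q. \<Sum>i\<in>Q. b j * (v i * laplacian N a i j))"
    by (rule sum.swap)
  also have "\<dots> = (\<Sum>j\<in>Q. b j * (\<Sum>i\<in>Q. v i * laplacian N a i j))"
    by (simp add: sum_distrib_left)
  also have "\<dots> = 0" using col by simp
  finally show ?thesis .
qed

lemma det_shifted_mat_nonzero:
  fixes B :: "nat \<Rightarrow> nat \<Rightarrow> real"
  assumes inj: "\<And>v. \<forall>j\<in>{1..N}. (\<Sum>i\<in>{1..N}. v i * B i j) = 0 \<Longrightarrow> \<forall>i\<in>{1..N}. v i = 0"
  shows "det (mat N N (\<lambda>(i, j). B (Suc i) (Suc j))) \<noteq> 0"
proof -
  define Bm where "Bm = mat N N (\<lambda>(i, j). B (Suc i) (Suc j))"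
  have Bm: "Bm \<in> carrier_mat N N" unfolding Bm_def by simp
  have "det (transpose_mat Bm) \<noteq> 0"
  proof
    assume "det (transpose_mat Bm) = 0"
    then obtain v where v: "v \<in> carrier_vec N" "v \<noteq> 0\<^sub>v N" "transpose_mat Bm *\<^sub>v v = 0\<^sub>v N"
      using det_0_iff_vec_prod_zero[of "transpose_mat Bm" N] Bm by auto
    have "\<forall>j\<in>{1..N}. (\<Sum>i\<in>{1..N}. vec_index v (i - 1) * B i j) = 0"
    proof
      fix j assume "j \<in> {1..N}"
      then obtain j0 where j0: "j = Suc j0" "j0 < N" by (cases j) auto
      have "vec_index (transpose_mat Bm *\<^sub>v v) j0 = 0" using v(3) j0 by simp
      thus "(\<Sum>i\<in>{1..N}. vec_index v (i - 1) * B i j) = 0"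
        using j0 v(1) unfolding Bm_def
        by (simp add: scalar_prod_def atLeast0LessThan sum.atLeast1_atMost_eq mult.commute)
    qed
    hence zero: "\<forall>i\<in>{1..N}. vec_index v (i - 1) = 0" by (rule inj)
    have "v = 0\<^sub>v N"
    proof (rule eq_vecI)
      fix i assume i: "i < dim_vec (0\<^sub>v N :: real vec)"
      hence "Suc i \<in> {1..N}" by simp
      thus "vec_index v i = vec_index (0\<^sub>v N) i" using zero i by force
    qed (use v(1) in simp)
    with v(2) show False by simp
  qed
  thus ?thesis using det_transpose[OF Bm] unfolding Bm_def by simp
qed

lemma square_system_solvable:
  fixes B :: "nat \<Rightarrow> nat \<Rightarrow> real" and r :: "nat \<Rightarrow> real"
  assumes inj: "\<And>v. \<forall>j\<in>{1..N}. (\<Sum>i\<in>{1..N}. v i * B i j) = 0 \<Longrightarrow> \<forall>i\<in>{1..N}. v i = 0"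
  shows "\<exists>b. \<forall>i\<in>{1..N}. (\<Sum>j\<in>{1..N}. B i j * b j) = r i"
proof -
  define Bm where "Bm = mat N N (\<lambda>(i, j). B (Suc i) (Suc j))"
  have Bm: "Bm \<in> carrier_mat N N" unfolding Bm_def by simp
  have "det Bm \<noteq> 0" unfolding Bm_def by (rule det_shifted_mat_nonzero[OF inj])
  then obtain Bi where Bi: "Bi \<in> carrier_mat N N" "Bm * Bi = 1\<^sub>m N"
    using det_non_zero_imp_unit[OF Bm, of "()"] unfolding Units_def ring_mat_def by auto
  define rv where "rv = vec N (\<lambda>i. r (Suc i))"
  define bv where "bv = Bi *\<^sub>v rv"
  have dim_bv: "dim_vec bv = N" unfolding bv_def using Bi(1) by simp
  have Bm_bv: "Bm *\<^sub>v bv = rv"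
    using Bm Bi unfolding rv_def bv_def by (simp add: assoc_mult_mat_vec[symmetric])
  have "\<forall>i\<in>{1..N}. (\<Sum>j\<in>{1..N}. B i j * vec_index bv (j - 1)) = r i"
  proof
    fix i assume "i \<in> {1..N}"
    then obtain i0 where i0: "i = Suc i0" "i0 < N" by (cases i) auto
    have "vec_index (Bm *\<^sub>v bv) i0 = r i" using Bm_bv i0 unfolding rv_def by simp
    thus "(\<Sum>j\<in>{1..N}. B i j * vec_index bv (j - 1)) = r i"
      using i0 dim_bv unfolding Bm_def
      by (simp add: scalar_prod_def atLeast0LessThan sum.atLeast1_atMost_eq)
  qed
  thus ?thesis by (rule exI[of "\<lambda>b. \<forall>i\<in>{1..N}. (\<Sum>j\<in>{1..N}. B i j * b j) = r i"])
qed

text \<open>Adding \<open>g j\<close> to every entry of column \<open>j\<close> removes the one-dimensional left kernel of the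
  Laplacian; the resulting invertible system yields the Fredholm alternative for \<open>L b = r\<close>.\<close>

lemma augmented_laplacian_left_kernel:
  assumes sc: "strongly_connected N a" and null_g: "laplacian_left_null N a g"
    and g_pos: "\<forall>i\<in>nodes N. g i > 0"
    and a_nonneg: "\<forall>i\<in>nodes N. \<forall>j\<in>nodes N. i \<noteq> j \<longrightarrow> a i j \<ge> 0"
    and v: "\<forall>j\<in>nodes N. (\<Sum>i\<in>nodes N. v i * (laplacian N a i j + g j)) = 0"
  shows "\<forall>i\<in>nodes N. v i = 0"
proof (cases "nodes N = {}")
  case False
  define V where "V = (\<Sum>i\<in>nodes N. v i)"
  have G: "(\<Sum>i\<in>nodes N. g i) > 0" using g_pos False by (intro sum_pos) auto
  have col: "(\<Sum>i\<in>nodes N. v i * laplacian N a i j) = - V * g j" if "j \<in> nodes N" for j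
    using v that unfolding V_def
    by (simp add: distrib_left sum.distrib sum_distrib_right[symmetric] eq_neg_iff_add_eq_0)
  have "(\<Sum>j\<in>nodes N. \<Sum>i\<in>nodes N. v i * laplacian N a i j) = 0"
    using sum_vec_mult_laplacian_mult_vec[where v = v and b = "\<lambda>_. 1"] laplacian_row_sum by simp
  moreover have "(\<Sum>j\<in>nodes N. \<Sum>i\<in>nodes N. v i * laplacian N a i j) = (\<Sum>j\<in>nodes N. - V * g j)"
    using col by simp
  ultimately have "V * (\<Sum>i\<in>nodes N. g i) = 0" by (simp add: sum_distrib_left sum_negf)
  hence V: "V = 0" using G by simp
  hence "laplacian_left_null N a v" unfolding laplacian_left_null_def using col by simp
  then obtain s where s: "\<forall>i\<in>nodes N. v i = s * g i"
    using laplacian_left_null_proportional[OF sc _ null_g g_pos a_nonneg False] by blast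
  hence "s * (\<Sum>i\<in>nodes N. g i) = 0" using V unfolding V_def by (simp add: sum_distrib_left)
  thus ?thesis using s G by simp
qed simp

lemma laplacian_solvable:
  assumes sc: "strongly_connected N a" and null_g: "laplacian_left_null N a g"
    and g_pos: "\<forall>i\<in>nodes N. g i > 0"
    and a_nonneg: "\<forall>i\<in>nodes N. \<forall>j\<in>nodes N. i \<noteq> j \<longrightarrow> a i j \<ge> 0"
    and orth: "(\<Sum>i\<in>nodes N. g i * r i) = 0"
  shows "\<exists>b. \<forall>i\<in>nodes N. (\<Sum>j\<in>nodes N. laplacian N a i j * b j) = r i"
proof -
  obtain b where b: "\<forall>i\<in>nodes N. (\<Sum>j\<in>nodes N. (laplacian N a i j + g j) * b j) = r i"
    using square_system_solvable[of N "\<lambda>i j. laplacian N a i j + g j" r]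
      augmented_laplacian_left_kernel[OF sc null_g g_pos a_nonneg] unfolding nodes_def by blast
  define gb where "gb = (\<Sum>j\<in>nodes N. g j * b j)"
  have Lb: "(\<Sum>j\<in>nodes N. laplacian N a i j * b j) = r i - gb" if "i \<in> nodes N" for i
    using b that unfolding gb_def by (simp add: distrib_right sum.distrib eq_diff_eq)
  have "(\<Sum>i\<in>nodes N. g i * (\<Sum>j\<in>nodes N. laplacian N a i j * b j)) = 0"
    using null_g unfolding sum_vec_mult_laplacian_mult_vec laplacian_left_null_def by simp
  hence "(\<Sum>i\<in>nodes N. g i) * gb = 0"
    using orth Lb by (simp add: right_diff_distrib sum_subtractf sum_distrib_right)
  moreover have "(\<Sum>i\<in>nodes N. g i) \<noteq> 0 \<or> nodes N = {}"
    using g_pos by (metis sum_pos finite_nodes less_irrefl)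
  ultimately show ?thesis using Lb by force
qed

section \<open>The coupling term\<close>

definition coupling ::
  "nat \<Rightarrow> real \<Rightarrow> (nat \<Rightarrow> real) \<Rightarrow> (nat \<Rightarrow> nat \<Rightarrow> real) \<Rightarrow> (nat \<Rightarrow> nat \<Rightarrow> real)
   \<Rightarrow> (nat \<Rightarrow> real \<Rightarrow> real) \<Rightarrow> nat \<Rightarrow> real \<Rightarrow> real" where
  "coupling N K c a tau x i t = K / c i * (\<Sum>j\<in>nbhd N a i. a i j * (x j (t - tau i j) - x i t))"

lemma is_solution_iff:
  "is_solution N K c a tau g y \<phi> x \<longleftrightarrow>
     (\<forall>i\<in>nodes N.
        (\<forall>t\<in>{- max_delay N tau..0}. x i t = \<phi> i t)
      \<and> continuous_on {- max_delay N tau..} (x i)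
      \<and> (\<forall>t>0. (x i has_real_derivative g i (y i) + coupling N K c a tau x i t) (at t)))"
  unfolding is_solution_def coupling_def ..

lemma coupling_diff:
  "coupling N K c a tau (\<lambda>i t. x i t - z i t) i t
     = coupling N K c a tau x i t - coupling N K c a tau z i t"
  unfolding coupling_def by (simp add: right_diff_distrib sum_subtractf)

lemma coupling_uminus: "coupling N K c a tau (\<lambda>i t. - x i t) i t = - coupling N K c a tau x i t"
proof -
  have "(\<Sum>j\<in>nbhd N a i. a i j * (- x j (t - tau i j) - - x i t))
      = (\<Sum>j\<in>nbhd N a i. - (a i j * (x j (t - tau i j) - x i t)))"
    by (simp add: algebra_simps)
  thus ?thesis unfolding coupling_def sum_negf by simp
qed

lemma coupling_affine:
  "coupling N K c a tau (\<lambda>i t. \<omega> * t + b i) i t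
     = K / c i * (\<Sum>j\<in>nbhd N a i. a i j * (b j - b i - \<omega> * tau i j))"
  unfolding coupling_def by (simp add: algebra_simps)

lemma nbhd_sum_affine:
  "(\<Sum>j\<in>nbhd N a i. a i j * (b j - b i - \<omega> * tau i j))
     = - (\<Sum>j\<in>nbhd N a i. a i j * (b i - b j)) - \<omega> * (\<Sum>j\<in>nbhd N a i. a i j * tau i j)"
  by (simp add: sum_subtractf sum_distrib_left sum.distrib algebra_simps)

definition weighted_degree :: "nat \<Rightarrow> real \<Rightarrow> (nat \<Rightarrow> real) \<Rightarrow> (nat \<Rightarrow> nat \<Rightarrow> real) \<Rightarrow> nat \<Rightarrow> real" where
  "weighted_degree N K c a i = K / c i * (\<Sum>j\<in>nbhd N a i. a i j)"

lemma coupling_eq_gap: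
  "coupling N K c a tau x i t
     = weighted_degree N K c a i * (M - x i t) - K / c i * (\<Sum>j\<in>nbhd N a i. a i j * (M - x j (t - tau i j)))"
proof -
  have "(\<Sum>j\<in>nbhd N a i. a i j * (x j (t - tau i j) - x i t))
      = (\<Sum>j\<in>nbhd N a i. a i j) * (M - x i t) - (\<Sum>j\<in>nbhd N a i. a i j * (M - x j (t - tau i j)))"
    by (simp add: sum_distrib_right right_diff_distrib sum_subtractf)
  thus ?thesis unfolding coupling_def weighted_degree_def by (simp add: right_diff_distrib mult.assoc)
qed

text \<open>A gap below the maximum at one node reaches every other node along a path of at most
  \<open>card (edges N a)\<close> edges.  Each edge costs a factor \<open>min_edge_gain\<close> and at most
  \<open>max_delay N tau + 1\<close> time units, during which the gap decays at most like
  \<open>exp (- max_degree * t)\<close>; a further \<open>max_delay N tau\<close> fills a whole delay window.\<close>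

definition max_degree :: "nat \<Rightarrow> real \<Rightarrow> (nat \<Rightarrow> real) \<Rightarrow> (nat \<Rightarrow> nat \<Rightarrow> real) \<Rightarrow> real" where
  "max_degree N K c a = Max (insert 0 (weighted_degree N K c a ` nodes N))"

definition min_edge_gain :: "nat \<Rightarrow> real \<Rightarrow> (nat \<Rightarrow> real) \<Rightarrow> (nat \<Rightarrow> nat \<Rightarrow> real) \<Rightarrow> real" where
  "min_edge_gain N K c a = Min (insert 1 ((\<lambda>(j, i). K / c i * a i j) ` edges N a))"

definition spreading_time :: "nat \<Rightarrow> (nat \<Rightarrow> nat \<Rightarrow> real) \<Rightarrow> (nat \<Rightarrow> nat \<Rightarrow> real) \<Rightarrow> real" where
  "spreading_time N a tau = real (card (edges N a)) * (max_delay N tau + 1) + max_delay N tau"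

definition contraction_gain ::
  "nat \<Rightarrow> real \<Rightarrow> (nat \<Rightarrow> real) \<Rightarrow> (nat \<Rightarrow> nat \<Rightarrow> real) \<Rightarrow> (nat \<Rightarrow> nat \<Rightarrow> real) \<Rightarrow> real" where
  "contraction_gain N K c a tau =
     min_edge_gain N K c a ^ card (edges N a) * exp (- max_degree N K c a * spreading_time N a tau)"

lemma max_degree_ge: "i \<in> nodes N \<Longrightarrow> weighted_degree N K c a i \<le> max_degree N K c a"
  unfolding max_degree_def by (intro Max_ge) auto

lemma max_degree_nonneg: "0 \<le> max_degree N K c a"
  unfolding max_degree_def by (intro Max_ge) auto

lemma min_edge_gain_le_one: "min_edge_gain N K c a \<le> 1"
  unfolding min_edge_gain_def by (intro Min_le) auto

lemma min_edge_gain_le: "(j, i) \<in> edges N a \<Longrightarrow> min_edge_gain N K c a \<le> K / c i * a i j"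
  unfolding min_edge_gain_def by (intro Min_le) force+

lemma spreading_time_nonneg: "0 \<le> spreading_time N a tau"
  unfolding spreading_time_def using max_delay_nonneg[of N tau] by simp

lemma mult_exp_minus_le: "q \<le> p * exp x \<Longrightarrow> q * exp (- x) \<le> (p :: real)"
  by (simp add: exp_minus divide_inverse[symmetric] pos_divide_le_eq)

locale delayed_network =
  fixes N :: nat and K :: real and c :: "nat \<Rightarrow> real" and a tau :: "nat \<Rightarrow> nat \<Rightarrow> real"
  assumes K_pos: "K > 0"
    and c_pos: "\<forall>i\<in>nodes N. c i > 0"
    and a_nonneg: "\<forall>i\<in>nodes N. \<forall>j\<in>nodes N. i \<noteq> j \<longrightarrow> a i j \<ge> 0"
    and tau_nonneg: "\<forall>i\<in>nodes N. \<forall>j\<in>nodes N. i \<noteq> j \<longrightarrow> tau i j \<ge> 0"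
begin

abbreviation "\<tau>max \<equiv> max_delay N tau"
abbreviation "dmax \<equiv> max_degree N K c a"
abbreviation "wmin \<equiv> min_edge_gain N K c a"
abbreviation "Tspread \<equiv> spreading_time N a tau"
abbreviation "\<kappa> \<equiv> contraction_gain N K c a tau"

lemma nbhd_facts:
  assumes "i \<in> nodes N" "j \<in> nbhd N a i"
  shows "j \<in> nodes N" "0 \<le> a i j" "0 \<le> tau i j" "tau i j \<le> \<tau>max"
  using assms nbhdD[of j N a i] a_nonneg tau_nonneg max_delay_ge[of i N j tau] by auto

lemma gain_pos: "i \<in> nodes N \<Longrightarrow> 0 < K / c i"
  using K_pos c_pos by simp

lemma wmin_pos: "0 < wmin"
proof -
  have "\<forall>x\<in>insert 1 ((\<lambda>(j, i). K / c i * a i j) ` edges N a). x > 0"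
    using K_pos c_pos unfolding edges_def by auto
  thus ?thesis unfolding min_edge_gain_def by (subst Min_gr_iff) auto
qed

lemma contraction_gain_pos: "0 < \<kappa>"
  unfolding contraction_gain_def using wmin_pos by simp

lemma contraction_gain_le_one: "\<kappa> \<le> 1"
proof -
  have "wmin ^ card (edges N a) \<le> 1"
    using wmin_pos min_edge_gain_le_one by (intro power_le_one) auto
  moreover have "exp (- dmax * Tspread) \<le> 1"
    using max_degree_nonneg spreading_time_nonneg by simp
  ultimately show ?thesis
    unfolding contraction_gain_def using wmin_pos by (intro mult_le_one) auto
qed

lemma coupling_nonpos_at_max:
  assumes i: "i \<in> nodes N" and max: "\<forall>j\<in>nodes N. \<forall>u\<in>{t - \<tau>max..t}. x j u \<le> x i t"
  shows "coupling N K c a tau x i t \<le> 0"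
proof -
  have "(\<Sum>j\<in>nbhd N a i. a i j * (x j (t - tau i j) - x i t)) \<le> 0"
  proof (rule sum_nonpos)
    fix j assume j: "j \<in> nbhd N a i"
    have "x j (t - tau i j) \<le> x i t" using max nbhd_facts[OF i j] by simp
    thus "a i j * (x j (t - tau i j) - x i t) \<le> 0"
      using nbhd_facts[OF i j] by (simp add: mult_nonneg_nonpos)
  qed
  thus ?thesis unfolding coupling_def using gain_pos[OF i] by (meson less_imp_le mult_nonneg_nonpos)
qed

lemma gap_term_nonneg:
  assumes i: "i \<in> nodes N" and j: "j \<in> nbhd N a i" and t: "t0 \<le> t"
    and bound: "\<forall>j\<in>nodes N. \<forall>u\<ge>t0 - \<tau>max. x j u \<le> M"
  shows "0 \<le> a i j * (M - x j (t - tau i j))"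
proof -
  have "x j (t - tau i j) \<le> M" using bound nbhd_facts[OF i j] t by simp
  thus ?thesis using nbhd_facts[OF i j] by simp
qed

lemma gap_inflow_nonneg:
  assumes i: "i \<in> nodes N" and t: "t0 \<le> t" and bound: "\<forall>j\<in>nodes N. \<forall>u\<ge>t0 - \<tau>max. x j u \<le> M"
  shows "0 \<le> K / c i * (\<Sum>j\<in>nbhd N a i. a i j * (M - x j (t - tau i j)))"
  using gap_term_nonneg[OF i _ t bound] gain_pos[OF i] by (meson less_imp_le mult_nonneg_nonneg sum_nonneg)

lemma gap_inflow_ge_edge:
  assumes edge: "(j, i) \<in> edges N a" and t: "t0 \<le> t"
    and bound: "\<forall>j\<in>nodes N. \<forall>u\<ge>t0 - \<tau>max. x j u \<le> M"
  shows "wmin * (M - x j (t - tau i j)) \<le> K / c i * (\<Sum>k\<in>nbhd N a i. a i k * (M - x k (t - tau i k)))"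
proof -
  have i: "i \<in> nodes N" and j: "j \<in> nbhd N a i" using edgesD[OF edge] by auto
  have "0 \<le> M - x j (t - tau i j)" using bound nbhd_facts[OF i j] t by simp
  hence "wmin * (M - x j (t - tau i j)) \<le> K / c i * a i j * (M - x j (t - tau i j))"
    using min_edge_gain_le[OF edge] by (rule mult_right_mono[rotated])
  also have "\<dots> = K / c i * (a i j * (M - x j (t - tau i j)))" by simp
  also have "\<dots> \<le> K / c i * (\<Sum>k\<in>nbhd N a i. a i k * (M - x k (t - tau i k)))"
    using gain_pos[OF i] gap_term_nonneg[OF i _ t bound] j
    by (intro mult_left_mono member_le_sum) auto
  finally show ?thesis .
qed

lemma gap_inflow_from_edge:
  assumes edge: "(j, i) \<in> edges N a" and t: "t0 \<le> t"
    and bound: "\<forall>j\<in>nodes N. \<forall>u\<ge>t0 - \<tau>max. x j u \<le> M" and G: "0 \<le> G"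
    and gap: "\<forall>u\<ge>t - \<tau>max. G * exp (- dmax * (u - t0)) \<le> M - x j u"
  shows "wmin * G * exp (- dmax * (t - t0)) \<le> K / c i * (\<Sum>k\<in>nbhd N a i. a i k * (M - x k (t - tau i k)))"
proof -
  have i: "i \<in> nodes N" and j: "j \<in> nbhd N a i" using edgesD[OF edge] by auto
  have "exp (- dmax * (t - t0)) \<le> exp (- dmax * (t - tau i j - t0))"
    using max_degree_nonneg nbhd_facts[OF i j] by (simp add: algebra_simps)
  hence "G * exp (- dmax * (t - t0)) \<le> G * exp (- dmax * (t - tau i j - t0))"
    using G by (rule mult_left_mono)
  also have "\<dots> \<le> M - x j (t - tau i j)"
    using gap nbhd_facts[OF i j] by simp
  finally have "wmin * (G * exp (- dmax * (t - t0))) \<le> wmin * (M - x j (t - tau i j))"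
    using wmin_pos by (intro mult_left_mono) auto
  also have "\<dots> \<le> K / c i * (\<Sum>k\<in>nbhd N a i. a i k * (M - x k (t - tau i k)))"
    by (rule gap_inflow_ge_edge[OF edge t bound])
  finally show ?thesis by (simp add: mult.assoc)
qed

lemma abs_coupling_le:
  assumes i: "i \<in> nodes N"
    and range: "\<forall>j\<in>nodes N. \<forall>u\<ge>t - \<tau>max. m \<le> x j u \<and> x j u \<le> M"
  shows "\<bar>coupling N K c a tau x i t\<bar> \<le> dmax * (M - m)"
proof -
  have xi: "m \<le> x i t \<and> x i t \<le> M" using range i max_delay_nonneg[of N tau] by simp
  have "\<bar>\<Sum>j\<in>nbhd N a i. a i j * (x j (t - tau i j) - x i t)\<bar> \<le> (\<Sum>j\<in>nbhd N a i. a i j * (M - m))"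
  proof (rule order_trans[OF sum_abs sum_mono])
    fix j assume j: "j \<in> nbhd N a i"
    have "m \<le> x j (t - tau i j) \<and> x j (t - tau i j) \<le> M" using range nbhd_facts[OF i j] by simp
    hence "\<bar>x j (t - tau i j) - x i t\<bar> \<le> M - m" using xi unfolding abs_le_iff by linarith
    thus "\<bar>a i j * (x j (t - tau i j) - x i t)\<bar> \<le> a i j * (M - m)"
      using nbhd_facts[OF i j] by (simp add: abs_mult mult_left_mono)
  qed
  hence "K / c i * \<bar>\<Sum>j\<in>nbhd N a i. a i j * (x j (t - tau i j) - x i t)\<bar>
      \<le> K / c i * (\<Sum>j\<in>nbhd N a i. a i j * (M - m))"
    using gain_pos[OF i] by (intro mult_left_mono) auto
  hence "\<bar>coupling N K c a tau x i t\<bar> \<le> weighted_degree N K c a i * (M - m)"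
    unfolding coupling_def weighted_degree_def abs_mult abs_of_pos[OF gain_pos[OF i]]
    by (simp add: sum_distrib_right mult.assoc)
  also have "\<dots> \<le> dmax * (M - m)"
    using max_degree_ge[OF i] xi by (intro mult_right_mono) auto
  finally show ?thesis .
qed

lemma block_weight_pos:
  assumes v: "\<forall>i\<in>Q. 0 < v i" and Q: "Q \<subseteq> nodes N" "Q \<noteq> {}"
  shows "0 < (\<Sum>i\<in>Q. v i * c i) + K * (\<Sum>i\<in>Q. \<Sum>j\<in>nbhd N a i. v i * a i j * tau i j)"
proof (rule add_pos_nonneg)
  have "finite Q" using Q(1) by (rule finite_subset) simp
  thus "0 < (\<Sum>i\<in>Q. v i * c i)" using Q v c_pos by (intro sum_pos) auto
  have "0 \<le> v i * a i j * tau i j" if "i \<in> Q" "j \<in> nbhd N a i" for i j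
  proof -
    have "i \<in> nodes N" using that Q by auto
    thus ?thesis using v that nbhd_facts[of i j] by (intro mult_nonneg_nonneg) auto
  qed
  hence "0 \<le> (\<Sum>i\<in>Q. \<Sum>j\<in>nbhd N a i. v i * a i j * tau i j)"
    by (intro sum_nonneg) auto
  thus "0 \<le> K * (\<Sum>i\<in>Q. \<Sum>j\<in>nbhd N a i. v i * a i j * tau i j)"
    using K_pos by simp
qed

end

section \<open>Contraction of the delayed consensus flow\<close>

lemma first_crossing:
  fixes f :: "'i \<Rightarrow> real \<Rightarrow> real"
  assumes fin: "finite I" and cont: "\<forall>i\<in>I. continuous_on {t0..t1} (f i)"
    and start: "\<forall>i\<in>I. f i t0 < 0" and i1: "i1 \<in> I" "0 \<le> f i1 t1" and t01: "t0 \<le> t1"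
  shows "\<exists>s. t0 < s \<and> s \<le> t1 \<and> (\<exists>i\<in>I. 0 \<le> f i s) \<and> (\<forall>i\<in>I. \<forall>u. t0 \<le> u \<and> u < s \<longrightarrow> f i u < 0)"
proof -
  define S where "S = {s \<in> {t0..t1}. \<exists>i\<in>I. 0 \<le> f i s}"
  have S_eq: "S = (\<Union>i\<in>I. {s \<in> {t0..t1}. 0 \<le> f i s})"
    unfolding S_def by auto
  have "closed {s \<in> {t0..t1}. 0 \<le> f i s}" if "i \<in> I" for i
    using continuous_on_closed_Collect_le[of "{t0..t1}" "\<lambda>_. 0" "f i"] cont that by auto
  hence "closed S" unfolding S_eq using fin by (intro closed_UN) auto
  moreover have "t1 \<in> S" unfolding S_def using i1 t01 by auto
  moreover have bdd: "bdd_below S" unfolding S_def by (auto intro: bdd_belowI[of _ t0])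
  ultimately have inf_S: "Inf S \<in> S" by (intro closed_contains_Inf) auto
  have below: "f i u < 0" if "i \<in> I" "t0 \<le> u" "u < Inf S" for i u
  proof (rule ccontr)
    assume "\<not> f i u < 0"
    hence "u \<in> S" using that inf_S unfolding S_def by (auto simp: not_less)
    hence "Inf S \<le> u" using bdd by (rule cInf_lower)
    thus False using that by simp
  qed
  have "Inf S \<noteq> t0" using inf_S start unfolding S_def by force
  hence "t0 < Inf S" using inf_S unfolding S_def by auto
  thus ?thesis using inf_S below by (intro exI[of _ "Inf S"]) (auto simp: S_def)
qed

lemma DERIV_neg_keeps_neg:
  fixes f :: "real \<Rightarrow> real"
  assumes deriv: "(f has_real_derivative l) (at s)" and l: "l < 0" and s: "t0 < s"
    and before: "\<forall>u. t0 \<le> u \<and> u < s \<longrightarrow> f u < 0"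
  shows "f s < 0"
proof -
  obtain d where d: "0 < d" "\<forall>h>0. h < d \<longrightarrow> f s < f (s - h)"
    using DERIV_neg_dec_left[OF deriv l] by blast
  define h where "h = min d (s - t0) / 2"
  have h: "0 < h" "h < d" "t0 \<le> s - h" using d s unfolding h_def by (auto simp: min_def field_simps)
  hence "f s < f (s - h)" using d by blast
  also have "f (s - h) < 0" using before h by simp
  finally show ?thesis .
qed

text \<open>The homogeneous system; it governs the difference of two solutions of the full system.\<close>

locale delayed_consensus = delayed_network +
  fixes e :: "nat \<Rightarrow> real \<Rightarrow> real"
  assumes e_cont: "\<forall>i\<in>nodes N. continuous_on {- max_delay N tau..} (e i)"
    and e_deriv: "\<forall>i\<in>nodes N. \<forall>t>0. (e i has_real_derivative coupling N K c a tau e i t) (at t)"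
begin

lemma uminus: "delayed_consensus N K c a tau (\<lambda>i t. - e i t)"
  unfolding delayed_consensus_def delayed_consensus_axioms_def
  using delayed_network_axioms e_cont e_deriv
  by (auto simp: coupling_uminus intro!: continuous_intros DERIV_minus)

lemma e_continuous_on: "i \<in> nodes N \<Longrightarrow> 0 \<le> t0 \<Longrightarrow> continuous_on {t0..t1} (e i)"
  using continuous_on_subset[of "{- \<tau>max..}" "e i" "{t0..t1}"] e_cont max_delay_nonneg[of N tau]
  by auto

text \<open>The linear barrier \<open>M + \<epsilon> (1 + u - t0)\<close> cannot be touched first: a node attaining the
  current maximum has nonpositive coupling, so it falls below a barrier of positive slope.\<close>

lemma barrier_not_reached:
  assumes t0: "0 \<le> t0" and window: "\<forall>i\<in>nodes N. \<forall>s\<in>{t0 - \<tau>max..t0}. e i s \<le> M"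
    and \<epsilon>: "0 < \<epsilon>" and s: "t0 < s"
    and below: "\<forall>i\<in>nodes N. \<forall>u. t0 \<le> u \<and> u < s \<longrightarrow> e i u < M + \<epsilon> * (1 + u - t0)"
  shows "\<forall>i\<in>nodes N. e i s < M + \<epsilon> * (1 + s - t0)"
proof (rule ccontr)
  define b where "b u = M + \<epsilon> * (1 + u - t0)" for u
  assume "\<not> (\<forall>i\<in>nodes N. e i s < M + \<epsilon> * (1 + s - t0))"
  then obtain i1 where i1: "i1 \<in> nodes N" "b s \<le> e i1 s" unfolding b_def by force
  have "Max ((\<lambda>j. e j s) ` nodes N) \<in> (\<lambda>j. e j s) ` nodes N"
    using i1 by (intro Max_in) auto
  then obtain im where "im \<in> nodes N" "e im s = Max ((\<lambda>j. e j s) ` nodes N)" by auto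
  hence im_max: "im \<in> nodes N" "\<forall>j\<in>nodes N. e j s \<le> e im s" by auto
  have top: "b s \<le> e im s" using i1 im_max by force
  have "e j u \<le> e im s" if j: "j \<in> nodes N" and u: "u \<in> {s - \<tau>max..s}" for j u
  proof -
    consider "u = s" | "u \<le> t0" | "t0 < u" "u < s" using u by fastforce
    then show ?thesis
    proof cases
      case 1
      thus ?thesis using im_max j by simp
    next
      case 2
      hence "e j u \<le> M" using window j u s by auto
      moreover have "M \<le> b s" unfolding b_def using \<epsilon> s by simp
      ultimately show ?thesis using top by simp
    next
      case 3
      hence "e j u < b u" using below j unfolding b_def by auto
      also have "b u \<le> b s" unfolding b_def using 3 \<epsilon> by simp
      finally show ?thesis using top by simp
    qed
  qed
  hence "coupling N K c a tau e im s \<le> 0" by (intro coupling_nonpos_at_max[OF im_max(1)]) auto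
  hence slope: "coupling N K c a tau e im s - \<epsilon> < 0" using \<epsilon> by simp
  have deriv: "((\<lambda>u. e im u - b u) has_real_derivative coupling N K c a tau e im s - \<epsilon>) (at s)"
    unfolding b_def using e_deriv im_max(1) s t0 by (auto intro!: derivative_eq_intros)
  have before: "\<forall>u. t0 \<le> u \<and> u < s \<longrightarrow> e im u - b u < 0"
    using below im_max(1) unfolding b_def by auto
  have "e im s - b s < 0" by (rule DERIV_neg_keeps_neg[OF deriv slope s before])
  thus False using top by simp
qed

lemma window_bound_persists:
  assumes t0: "0 \<le> t0" and window: "\<forall>i\<in>nodes N. \<forall>s\<in>{t0 - \<tau>max..t0}. e i s \<le> M"
  shows "\<forall>i\<in>nodes N. \<forall>s\<ge>t0 - \<tau>max. e i s \<le> M"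
proof (intro ballI allI impI, rule ccontr)
  fix i1 s1 assume i1: "i1 \<in> nodes N" and "t0 - \<tau>max \<le> s1" and "\<not> e i1 s1 \<le> M"
  hence above: "M < e i1 s1" and s1: "t0 < s1" using window by force+
  define d where "d = 1 + s1 - t0"
  define \<epsilon> where "\<epsilon> = (e i1 s1 - M) / (2 * d)"
  define b where "b u = M + \<epsilon> * (1 + u - t0)" for u
  have d: "0 < d" unfolding d_def using s1 by simp
  have \<epsilon>: "0 < \<epsilon>" unfolding \<epsilon>_def using above d by simp
  have "\<epsilon> * (1 + s1 - t0) = (e i1 s1 - M) / 2" unfolding \<epsilon>_def d_def[symmetric] using d by simp
  hence reach: "0 \<le> e i1 s1 - b s1" unfolding b_def using above by simp
  have start: "\<forall>i\<in>nodes N. e i t0 - b t0 < 0"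
  proof
    fix i assume "i \<in> nodes N"
    hence "e i t0 \<le> M" using window max_delay_nonneg[of N tau] by simp
    thus "e i t0 - b t0 < 0" unfolding b_def using \<epsilon> by simp
  qed
  have cont: "\<forall>i\<in>nodes N. continuous_on {t0..s1} (\<lambda>u. e i u - b u)"
    using e_continuous_on[OF _ t0] unfolding b_def by (auto intro!: continuous_intros)
  obtain s where s: "t0 < s" and hit: "\<exists>i\<in>nodes N. 0 \<le> e i s - b s"
    and below: "\<forall>i\<in>nodes N. \<forall>u. t0 \<le> u \<and> u < s \<longrightarrow> e i u - b u < 0"
    using first_crossing[OF finite_nodes cont start i1 reach] s1 by auto
  show False
    using barrier_not_reached[OF t0 window \<epsilon> s] below hit unfolding b_def by force
qed

lemma window_range_persists:
  assumes t0: "0 \<le> t0" and window: "\<forall>i\<in>nodes N. \<forall>s\<in>{t0 - \<tau>max..t0}. m \<le> e i s \<and> e i s \<le> M"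
  shows "\<forall>i\<in>nodes N. \<forall>s\<ge>t0 - \<tau>max. m \<le> e i s \<and> e i s \<le> M"
proof -
  interpret neg: delayed_consensus N K c a tau "\<lambda>i t. - e i t" by (rule uminus)
  have "\<forall>i\<in>nodes N. \<forall>s\<ge>t0 - \<tau>max. e i s \<le> M"
    using window by (intro window_bound_persists[OF t0]) auto
  moreover have "\<forall>i\<in>nodes N. \<forall>s\<ge>t0 - \<tau>max. - e i s \<le> - m"
    using window by (intro neg.window_bound_persists[OF t0]) auto
  ultimately show ?thesis by force
qed

text \<open>Multiplying the gap \<open>M - e i\<close> by \<open>exp (dmax (t - t0))\<close> absorbs the self-damping term of
  the coupling, leaving the inflow from the neighbours as a lower bound for the derivative.\<close>

lemma gap_growth:
  assumes i: "i \<in> nodes N" and t0: "0 \<le> t0" and t1: "t0 \<le> t1" "t1 \<le> t" and B: "0 \<le> B"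
    and bound: "\<forall>j\<in>nodes N. \<forall>s\<ge>t0 - \<tau>max. e j s \<le> M"
    and inflow: "\<forall>s. t1 < s \<and> s < t \<longrightarrow>
       B * exp (- dmax * (s - t0)) \<le> K / c i * (\<Sum>j\<in>nbhd N a i. a i j * (M - e j (s - tau i j)))"
  shows "(M - e i t1) * exp (dmax * (t1 - t0)) + B * (t - t1) \<le> (M - e i t) * exp (dmax * (t - t0))"
proof -
  define F where "F s = (M - e i s) * exp (dmax * (s - t0)) - B * s" for s
  have "F t1 \<le> F t"
  proof (rule DERIV_nonneg_imp_increasing_open[OF t1(2)])
    fix s assume s: "t1 < s" "s < t"
    define E where "E = exp (dmax * (s - t0))"
    let ?v = "coupling N K c a tau e i s"
    have de: "(e i has_real_derivative ?v) (at s)" using e_deriv i s t0 t1 by simp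
    have dF: "(F has_real_derivative - ?v * E + (M - e i s) * (E * dmax) - B) (at s)"
      unfolding F_def E_def by (rule derivative_eq_intros de refl | simp)+
    have "0 \<le> M - e i s" using bound i s t1 max_delay_nonneg[of N tau] by simp
    hence "weighted_degree N K c a i * (M - e i s) \<le> dmax * (M - e i s)"
      by (rule mult_right_mono[OF max_degree_ge[OF i]])
    moreover have "?v = weighted_degree N K c a i * (M - e i s)
        - K / c i * (\<Sum>j\<in>nbhd N a i. a i j * (M - e j (s - tau i j)))"
      by (rule coupling_eq_gap)
    moreover have "B * exp (- dmax * (s - t0)) \<le> K / c i * (\<Sum>j\<in>nbhd N a i. a i j * (M - e j (s - tau i j)))"
      using inflow s by simp
    ultimately have "B * exp (- dmax * (s - t0)) \<le> dmax * (M - e i s) - ?v" by linarith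
    hence "E * (B * exp (- dmax * (s - t0))) \<le> E * (dmax * (M - e i s) - ?v)"
      unfolding E_def by (rule mult_left_mono) simp
    moreover have "E * (B * exp (- dmax * (s - t0))) = B"
      unfolding E_def by (simp add: exp_minus)
    moreover have "- ?v * E + (M - e i s) * (E * dmax) - B = E * (dmax * (M - e i s) - ?v) - B"
      by (simp add: algebra_simps)
    ultimately have "0 \<le> - ?v * E + (M - e i s) * (E * dmax) - B" by linarith
    thus "\<exists>y. (F has_real_derivative y) (at s) \<and> 0 \<le> y" using dF by blast
  next
    show "continuous_on {t1..t} F"
      unfolding F_def using e_continuous_on[OF i, of t1 t] t0 t1 by (intro continuous_intros) auto
  qed
  thus ?thesis unfolding F_def by (simp add: algebra_simps)
qed

lemma gap_decays_at_most_exponentially: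
  assumes i: "i \<in> nodes N" and t0: "0 \<le> t0" and t: "t0 \<le> t"
    and bound: "\<forall>j\<in>nodes N. \<forall>s\<ge>t0 - \<tau>max. e j s \<le> M"
  shows "(M - e i t0) * exp (- dmax * (t - t0)) \<le> M - e i t"
proof -
  have "(M - e i t0) * exp (dmax * (t0 - t0)) + 0 * (t - t0) \<le> (M - e i t) * exp (dmax * (t - t0))"
    using gap_inflow_nonneg[OF i _ bound] by (intro gap_growth[OF i t0 order_refl t _ bound]) auto
  hence "(M - e i t0) * exp (- (dmax * (t - t0))) \<le> M - e i t" by (intro mult_exp_minus_le) simp
  thus ?thesis by simp
qed

lemma gap_crosses_edge:
  assumes t0: "0 \<le> t0" and bound: "\<forall>j\<in>nodes N. \<forall>s\<ge>t0 - \<tau>max. e j s \<le> M"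
    and edge: "(j, i) \<in> edges N a" and G: "0 \<le> G" and T: "t0 \<le> T"
    and gap_j: "\<forall>u\<ge>T. G * exp (- dmax * (u - t0)) \<le> M - e j u"
    and t: "T + \<tau>max + 1 \<le> t"
  shows "wmin * G * exp (- dmax * (t - t0)) \<le> M - e i t"
proof -
  have i: "i \<in> nodes N" using edgesD[OF edge] by simp
  define t1 where "t1 = T + \<tau>max"
  have t1: "t0 \<le> t1" "t1 + 1 \<le> t" using T t max_delay_nonneg[of N tau] unfolding t1_def by auto
  define B where "B = wmin * G"
  have B: "0 \<le> B" unfolding B_def using G wmin_pos by simp
  have "(M - e i t1) * exp (dmax * (t1 - t0)) + B * (t - t1) \<le> (M - e i t) * exp (dmax * (t - t0))"
  proof (rule gap_growth[OF i t0 t1(1) _ B bound], use t1 in simp, intro allI impI)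
    fix s assume s: "t1 < s \<and> s < t"
    have gap_s: "\<forall>u\<ge>s - \<tau>max. G * exp (- dmax * (u - t0)) \<le> M - e j u"
    proof (intro allI impI)
      fix u assume "s - \<tau>max \<le> u"
      hence "T \<le> u" using s unfolding t1_def by linarith
      thus "G * exp (- dmax * (u - t0)) \<le> M - e j u" using gap_j by blast
    qed
    have "wmin * G * exp (- dmax * (s - t0)) \<le> K / c i * (\<Sum>k\<in>nbhd N a i. a i k * (M - e k (s - tau i k)))"
      by (rule gap_inflow_from_edge[OF edge _ bound G gap_s]) (use s t1 in auto)
    thus "B * exp (- dmax * (s - t0)) \<le> K / c i * (\<Sum>j\<in>nbhd N a i. a i j * (M - e j (s - tau i j)))"
      unfolding B_def .
  qed
  moreover have "0 \<le> (M - e i t1) * exp (dmax * (t1 - t0))"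
    using bound i t1 max_delay_nonneg[of N tau] by simp
  moreover have "B \<le> B * (t - t1)" using B t1 by (simp add: mult_le_cancel_left1)
  ultimately have "B \<le> (M - e i t) * exp (dmax * (t - t0))" by linarith
  hence "B * exp (- (dmax * (t - t0))) \<le> M - e i t" by (rule mult_exp_minus_le)
  thus ?thesis unfolding B_def by simp
qed

lemma gap_propagates:
  assumes t0: "0 \<le> t0" and bound: "\<forall>j\<in>nodes N. \<forall>s\<ge>t0 - \<tau>max. e j s \<le> M"
    and i0: "i0 \<in> nodes N" and \<delta>: "0 \<le> \<delta>" "\<delta> \<le> M - e i0 t0"
  shows "(i0, i) \<in> edges N a ^^ k \<Longrightarrow> t0 + real k * (\<tau>max + 1) \<le> t \<Longrightarrow>
    \<delta> * wmin ^ k * exp (- dmax * (t - t0)) \<le> M - e i t"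
proof (induction k arbitrary: i t)
  case 0
  hence "i = i0" "t0 \<le> t" by auto
  hence "(M - e i0 t0) * exp (- dmax * (t - t0)) \<le> M - e i t"
    using gap_decays_at_most_exponentially[OF i0 t0 _ bound] by simp
  moreover have "\<delta> * exp (- dmax * (t - t0)) \<le> (M - e i0 t0) * exp (- dmax * (t - t0))"
    using \<delta> by (intro mult_right_mono) auto
  ultimately have "\<delta> * exp (- dmax * (t - t0)) \<le> M - e i t" by (rule order_trans[rotated])
  thus ?case by simp
next
  case (Suc k)
  from Suc.prems(1) obtain j where path: "(i0, j) \<in> edges N a ^^ k" and edge: "(j, i) \<in> edges N a"
    by (rule relpow_Suc_E)
  have gap_j: "\<forall>u\<ge>t0 + real k * (\<tau>max + 1). \<delta> * wmin ^ k * exp (- dmax * (u - t0)) \<le> M - e j u"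
    using Suc.IH[OF path] by blast
  have t: "t0 + real k * (\<tau>max + 1) + \<tau>max + 1 \<le> t"
    using Suc.prems(2) by (simp add: algebra_simps)
  have "wmin * (\<delta> * wmin ^ k) * exp (- dmax * (t - t0)) \<le> M - e i t"
    by (rule gap_crosses_edge[OF t0 bound edge _ _ gap_j t])
      (use \<delta> wmin_pos max_delay_nonneg[of N tau] in auto)
  thus ?case by (simp add: mult_ac)
qed

lemma upper_bound_contracts:
  assumes sc: "strongly_connected N a" and t0: "0 \<le> t0"
    and window: "\<forall>i\<in>nodes N. \<forall>s\<in>{t0 - \<tau>max..t0}. e i s \<le> M"
    and i0: "i0 \<in> nodes N" and \<delta>: "0 \<le> \<delta>" "\<delta> \<le> M - e i0 t0"
  shows "\<forall>i\<in>nodes N. \<forall>s\<ge>t0 + Tspread - \<tau>max. e i s \<le> M - \<delta> * \<kappa>"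
proof -
  have bound: "\<forall>j\<in>nodes N. \<forall>s\<ge>t0 - \<tau>max. e j s \<le> M" by (rule window_bound_persists[OF t0 window])
  have "e i s \<le> M - \<delta> * \<kappa>" if i: "i \<in> nodes N" and s: "s \<in> {t0 + Tspread - \<tau>max..t0 + Tspread}" for i s
  proof -
    obtain k where k: "k \<le> card (edges N a)" "(i0, i) \<in> edges N a ^^ k"
      using strongly_connected_path[OF sc i0 i] .
    have "real k * (\<tau>max + 1) \<le> real (card (edges N a)) * (\<tau>max + 1)"
      using k(1) max_delay_nonneg[of N tau] by (intro mult_right_mono) auto
    hence "t0 + real k * (\<tau>max + 1) \<le> s" using s unfolding spreading_time_def atLeastAtMost_iff by linarith
    hence gap: "\<delta> * wmin ^ k * exp (- dmax * (s - t0)) \<le> M - e i s"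
      by (rule gap_propagates[OF t0 bound i0 \<delta> k(2)])
    have "wmin ^ card (edges N a) \<le> wmin ^ k"
      using wmin_pos min_edge_gain_le_one k(1) by (intro power_decreasing) auto
    moreover have "exp (- dmax * Tspread) \<le> exp (- dmax * (s - t0))"
      using s max_degree_nonneg by (simp add: mult_left_mono)
    ultimately have "\<kappa> \<le> wmin ^ k * exp (- dmax * (s - t0))"
      unfolding contraction_gain_def using wmin_pos by (intro mult_mono) auto
    hence "\<delta> * \<kappa> \<le> \<delta> * wmin ^ k * exp (- dmax * (s - t0))"
      using \<delta> by (simp add: mult_left_mono mult.assoc)
    thus ?thesis using gap by simp
  qed
  moreover have "0 \<le> t0 + Tspread" using t0 spreading_time_nonneg by simp
  ultimately show ?thesis by (intro window_bound_persists) auto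
qed

lemma window_range_contracts:
  assumes sc: "strongly_connected N a" and p: "p \<in> nodes N" and t0: "0 \<le> t0"
    and window: "\<forall>i\<in>nodes N. \<forall>s\<in>{t0 - \<tau>max..t0}. m \<le> e i s \<and> e i s \<le> M"
  shows "\<exists>m' M'. M' - m' \<le> (1 - \<kappa> / 2) * (M - m) \<and>
           (\<forall>i\<in>nodes N. \<forall>s\<ge>t0 + Tspread - \<tau>max. m' \<le> e i s \<and> e i s \<le> M')"
proof -
  interpret neg: delayed_consensus N K c a tau "\<lambda>i t. - e i t" by (rule uminus)
  have range: "\<forall>i\<in>nodes N. \<forall>s\<ge>t0 - \<tau>max. m \<le> e i s \<and> e i s \<le> M"
    by (rule window_range_persists[OF t0 window])
  have mM: "m \<le> M" using range p max_delay_nonneg[of N tau] by force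
  have range': "\<forall>i\<in>nodes N. \<forall>s\<ge>t0 + Tspread - \<tau>max. m \<le> e i s \<and> e i s \<le> M"
    using range spreading_time_nonneg[of N a tau] by force
  show ?thesis
  proof (cases "e p t0 \<le> (M + m) / 2")
    case True
    have "\<forall>i\<in>nodes N. \<forall>s\<ge>t0 + Tspread - \<tau>max. e i s \<le> M - (M - m) / 2 * \<kappa>"
      using True window mM by (intro upper_bound_contracts[OF sc t0 _ p]) auto
    thus ?thesis using range'
      by (intro exI[of _ m] exI[of _ "M - (M - m) / 2 * \<kappa>"]) (auto simp: algebra_simps)
  next
    case False
    have "\<forall>i\<in>nodes N. \<forall>s\<ge>t0 + Tspread - \<tau>max. - e i s \<le> - m - (M - m) / 2 * \<kappa>"
      using False window mM by (intro neg.upper_bound_contracts[OF sc t0 _ p]) auto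
    thus ?thesis using range'
      by (intro exI[of _ "m + (M - m) / 2 * \<kappa>"] exI[of _ M]) (auto simp: algebra_simps)
  qed
qed

lemma initial_bound: "\<exists>B. \<forall>i\<in>nodes N. \<forall>s\<in>{- \<tau>max..0}. \<bar>e i s\<bar> \<le> B"
proof -
  have "compact (\<Union>i\<in>nodes N. e i ` {- \<tau>max..0})"
  proof (intro compact_UN finite_nodes compact_continuous_image)
    fix i assume "i \<in> nodes N"
    thus "continuous_on {- \<tau>max..0} (e i)" using e_cont by (auto intro: continuous_on_subset)
  qed simp
  hence "bounded (\<Union>i\<in>nodes N. e i ` {- \<tau>max..0})" by (rule compact_imp_bounded)
  then obtain B where "\<forall>x\<in>(\<Union>i\<in>nodes N. e i ` {- \<tau>max..0}). \<bar>x\<bar> \<le> B"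
    unfolding bounded_real by blast
  thus ?thesis by auto
qed

lemma oscillation_decays_geometrically:
  assumes sc: "strongly_connected N a" and p: "p \<in> nodes N"
    and B: "\<forall>i\<in>nodes N. \<forall>s\<in>{- \<tau>max..0}. \<bar>e i s\<bar> \<le> B"
  shows "\<exists>m M. M - m \<le> (1 - \<kappa> / 2) ^ n * (2 * B) \<and>
           (\<forall>i\<in>nodes N. \<forall>s\<ge>real n * Tspread - \<tau>max. m \<le> e i s \<and> e i s \<le> M)"
proof (induction n)
  case 0
  have "- B \<le> e i s \<and> e i s \<le> B" if "i \<in> nodes N" "s \<in> {0 - \<tau>max..0}" for i s
  proof -
    have "\<bar>e i s\<bar> \<le> B" using B that by simp
    thus ?thesis by (simp add: abs_le_iff)
  qed
  hence "\<forall>i\<in>nodes N. \<forall>s\<ge>0 - \<tau>max. - B \<le> e i s \<and> e i s \<le> B"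
    by (intro window_range_persists) auto
  thus ?case by (intro exI[of _ "- B"] exI[of _ B]) simp
next
  case (Suc n)
  then obtain m M where mM: "M - m \<le> (1 - \<kappa> / 2) ^ n * (2 * B)"
    "\<forall>i\<in>nodes N. \<forall>s\<ge>real n * Tspread - \<tau>max. m \<le> e i s \<and> e i s \<le> M" by blast
  obtain m' M' where mM': "M' - m' \<le> (1 - \<kappa> / 2) * (M - m)"
    "\<forall>i\<in>nodes N. \<forall>s\<ge>real n * Tspread + Tspread - \<tau>max. m' \<le> e i s \<and> e i s \<le> M'"
    using window_range_contracts[OF sc p, of "real n * Tspread" m M] mM(2) spreading_time_nonneg[of N a tau]
    by force
  have "(1 - \<kappa> / 2) * (M - m) \<le> (1 - \<kappa> / 2) * ((1 - \<kappa> / 2) ^ n * (2 * B))"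
    using mM(1) contraction_gain_le_one by (intro mult_left_mono) auto
  hence "M' - m' \<le> (1 - \<kappa> / 2) ^ Suc n * (2 * B)" using mM'(1) by simp
  moreover have "real (Suc n) * Tspread = real n * Tspread + Tspread" by (simp add: algebra_simps)
  ultimately show ?case using mM'(2) by (intro exI[of _ m'] exI[of _ M']) auto
qed

lemma oscillation_vanishes:
  assumes sc: "strongly_connected N a" and p: "p \<in> nodes N" and \<eta>: "0 < \<eta>"
  shows "\<exists>T m M. M - m \<le> \<eta> \<and> (\<forall>i\<in>nodes N. \<forall>s\<ge>T. m \<le> e i s \<and> e i s \<le> M)"
proof -
  obtain B where B: "\<forall>i\<in>nodes N. \<forall>s\<in>{- \<tau>max..0}. \<bar>e i s\<bar> \<le> B" using initial_bound by blast
  have "0 \<le> B" using B p max_delay_nonneg[of N tau] by (meson abs_ge_zero atLeastAtMost_iff neg_le_0_iff_le order_refl order_trans)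
  moreover have "1 - \<kappa> / 2 < 1" using contraction_gain_pos by simp
  ultimately obtain n where n: "(1 - \<kappa> / 2) ^ n < \<eta> / (2 * B + 1)"
    using real_arch_pow_inv[of "\<eta> / (2 * B + 1)" "1 - \<kappa> / 2"] \<eta> by auto
  have "0 \<le> (1 - \<kappa> / 2) ^ n" using contraction_gain_le_one by simp
  hence "(1 - \<kappa> / 2) ^ n * (2 * B) \<le> \<eta>"
    using n \<open>0 \<le> B\<close> by (simp add: field_simps)
  thus ?thesis using oscillation_decays_geometrically[OF sc p B, of n] by (meson order_trans)
qed

lemma coupling_tendsto_zero:
  assumes sc: "strongly_connected N a" and i: "i \<in> nodes N"
  shows "((\<lambda>t. coupling N K c a tau e i t) \<longlongrightarrow> 0) at_top"
proof (rule tendstoI)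
  fix \<eta> :: real assume \<eta>: "0 < \<eta>"
  have dmax: "0 \<le> dmax" by (rule max_degree_nonneg)
  obtain T m M where mM: "M - m \<le> \<eta> / (dmax + 1)" "\<forall>j\<in>nodes N. \<forall>s\<ge>T. m \<le> e j s \<and> e j s \<le> M"
    using oscillation_vanishes[OF sc i, of "\<eta> / (dmax + 1)"] \<eta> dmax by auto
  have "\<bar>coupling N K c a tau e i t\<bar> < \<eta>" if "T + \<tau>max \<le> t" for t
  proof -
    have "\<bar>coupling N K c a tau e i t\<bar> \<le> dmax * (M - m)"
      using mM(2) that by (intro abs_coupling_le[OF i]) auto
    also have "\<dots> \<le> dmax * (\<eta> / (dmax + 1))" by (rule mult_left_mono[OF mM(1) dmax])
    also have "\<dots> < \<eta>" using \<eta> dmax by (simp add: field_simps)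
    finally show ?thesis .
  qed
  thus "\<forall>\<^sub>F t in at_top. dist (coupling N K c a tau e i t) 0 < \<eta>"
    unfolding eventually_at_top_linorder dist_real_def by auto
qed

end

section \<open>Synchronization\<close>

context delayed_network
begin

lemma solution_difference_consensus:
  assumes x: "is_solution N K c a tau g y \<phi> x" and z: "is_solution N K c a tau g y \<psi> z"
  shows "delayed_consensus N K c a tau (\<lambda>i t. x i t - z i t)"
proof -
  have "((\<lambda>t. x i t - z i t) has_real_derivative coupling N K c a tau (\<lambda>i t. x i t - z i t) i t) (at t)"
    if "i \<in> nodes N" "0 < t" for i t
  proof -
    have "(x i has_real_derivative g i (y i) + coupling N K c a tau x i t) (at t)"
      and "(z i has_real_derivative g i (y i) + coupling N K c a tau z i t) (at t)"
      using x z that unfolding is_solution_iff by blast+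
    from DERIV_diff[OF this] show ?thesis by (simp add: coupling_diff)
  qed
  moreover have "continuous_on {- \<tau>max..} (\<lambda>t. x i t - z i t)" if "i \<in> nodes N" for i
    using x z that unfolding is_solution_iff by (auto intro: continuous_on_diff)
  ultimately show ?thesis
    unfolding delayed_consensus_def delayed_consensus_axioms_def using delayed_network_axioms by auto
qed

lemma synchronizes_if_affine_solution:
  assumes sc: "strongly_connected N a"
    and affine: "\<forall>i\<in>nodes N. g i (y i) + K / c i * (\<Sum>j\<in>nbhd N a i. a i j * (b j - b i - \<omega> * tau i j)) = \<omega>"
  shows "globally_synchronizes_with N K c a tau g y \<omega>"
proof -
  define z where "z i t = \<omega> * t + b i" for i t
  have z_deriv: "(z i has_real_derivative \<omega>) (at t)" for i t
    unfolding z_def by (auto intro!: derivative_eq_intros)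
  have z_cont: "continuous_on S (z i)" for S i
    unfolding z_def by (intro continuous_intros)
  have z_eq: "g i (y i) + coupling N K c a tau z i t = \<omega>" if "i \<in> nodes N" for i t
    using affine that unfolding z_def coupling_affine by simp
  have z_sol: "is_solution N K c a tau g y z z"
    unfolding is_solution_iff using z_cont z_deriv z_eq by simp
  have "((\<lambda>t. deriv (x i) t) \<longlongrightarrow> \<omega>) at_top"
    if x: "is_solution N K c a tau g y \<phi> x" and i: "i \<in> nodes N" for \<phi> x i
  proof -
    interpret err: delayed_consensus N K c a tau "\<lambda>i t. x i t - z i t"
      by (rule solution_difference_consensus[OF x z_sol])
    have "\<forall>\<^sub>F t in at_top. \<omega> + coupling N K c a tau (\<lambda>i t. x i t - z i t) i t = deriv (x i) t"
      using eventually_gt_at_top[of 0]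
    proof eventually_elim
      case (elim t)
      have "deriv (x i) t = g i (y i) + coupling N K c a tau x i t"
        using x i elim unfolding is_solution_iff by (blast intro: DERIV_imp_deriv)
      thus ?case using z_eq[OF i, of t] by (simp add: coupling_diff)
    qed
    moreover have "((\<lambda>t. \<omega> + coupling N K c a tau (\<lambda>i t. x i t - z i t) i t) \<longlongrightarrow> \<omega> + 0) at_top"
      by (intro tendsto_add tendsto_const err.coupling_tendsto_zero[OF sc i])
    ultimately show ?thesis using Lim_transform_eventually by fastforce
  qed
  moreover have "admissible_init N tau z"
    unfolding admissible_init_def using z_cont by (auto intro!: compact_imp_bounded compact_continuous_image)
  ultimately show ?thesis
    unfolding globally_synchronizes_with_def using z_sol z_deriv by blast
qed

lemma synchronous_solution_affine:
  assumes x: "is_solution N K c a tau g y \<phi> x"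
    and sync: "\<forall>i\<in>nodes N. \<forall>t>0. (x i has_real_derivative \<omega>) (at t)"
  shows "\<exists>b. \<forall>i\<in>nodes N. \<omega> = g i (y i) + K / c i * (\<Sum>j\<in>nbhd N a i. a i j * (b j - b i - \<omega> * tau i j))"
proof -
  have "\<exists>b. \<forall>t>0. x i t = \<omega> * t + b" if i: "i \<in> nodes N" for i
  proof -
    have "\<exists>b. \<forall>t\<in>{0<..}. x i t - \<omega> * t = b"
    proof (rule has_field_derivative_zero_constant)
      fix t :: real assume "t \<in> {0<..}"
      hence "((\<lambda>t. x i t - \<omega> * t) has_real_derivative \<omega> - \<omega> * 1) (at t)"
        using sync i by (auto intro!: derivative_eq_intros)
      thus "((\<lambda>t. x i t - \<omega> * t) has_real_derivative 0) (at t within {0<..})"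
        by (simp add: has_field_derivative_at_within)
    qed simp
    thus ?thesis by (metis add.commute diff_eq_eq greaterThan_iff)
  qed
  then obtain b where b: "\<forall>i\<in>nodes N. \<forall>t>0. x i t = \<omega> * t + b i" by metis
  define T where "T = \<tau>max + 1"
  have T: "0 < T" unfolding T_def using max_delay_nonneg[of N tau] by simp
  have "\<omega> = g i (y i) + coupling N K c a tau (\<lambda>i t. \<omega> * t + b i) i T" if i: "i \<in> nodes N" for i
  proof -
    have "coupling N K c a tau x i T = coupling N K c a tau (\<lambda>i t. \<omega> * t + b i) i T"
      unfolding coupling_def
    proof (intro arg_cong[where f = "\<lambda>s. K / c i * s"] sum.cong refl)
      fix j assume j: "j \<in> nbhd N a i"
      have "0 < T - tau i j" using nbhd_facts[OF i j] unfolding T_def by simp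
      thus "a i j * (x j (T - tau i j) - x i T) = a i j * (\<omega> * (T - tau i j) + b j - (\<omega> * T + b i))"
        using b i T nbhd_facts[OF i j] by simp
    qed
    moreover have "(x i has_real_derivative g i (y i) + coupling N K c a tau x i T) (at T)"
      using x i T unfolding is_solution_iff by blast
    ultimately show ?thesis using DERIV_unique sync i T by metis
  qed
  thus ?thesis unfolding coupling_affine by blast
qed

lemma sync_frequency_unique:
  assumes ne: "nodes N \<noteq> {}"
    and sync1: "globally_synchronizes_with N K c a tau g y \<omega>1"
    and sync2: "globally_synchronizes_with N K c a tau g y \<omega>2"
  shows "\<omega>1 = \<omega>2"
proof -
  obtain p where p: "p \<in> nodes N" using ne by blast
  obtain \<phi> x where x: "admissible_init N tau \<phi> \<and> is_solution N K c a tau g y \<phi> x"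
    and x_deriv: "\<forall>i\<in>nodes N. \<forall>t>0. (x i has_real_derivative \<omega>1) (at t)"
    using sync1 unfolding globally_synchronizes_with_def by blast
  have "\<forall>\<^sub>F t in at_top. \<omega>1 = deriv (x p) t"
    using eventually_gt_at_top[of 0] by eventually_elim (use x_deriv p in \<open>metis DERIV_imp_deriv\<close>)
  hence lim1: "((\<lambda>t. deriv (x p) t) \<longlongrightarrow> \<omega>1) at_top"
    by (rule Lim_transform_eventually[OF tendsto_const])
  have lim2: "((\<lambda>t. deriv (x p) t) \<longlongrightarrow> \<omega>2) at_top"
    using sync2 x p unfolding globally_synchronizes_with_def by blast
  show ?thesis using tendsto_unique[OF _ lim1 lim2] by simp
qed

lemma omega_gamma_const:
  assumes s: "0 < s" and \<gamma>: "\<forall>i\<in>nodes N. \<gamma> i = s"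
  shows "omega_gamma N K c a tau g y \<gamma> = omega_bal N K c a tau g y"
proof -
  define C where "C = (\<Sum>i\<in>nodes N. c i)"
  define Z where "Z = (\<Sum>i\<in>nodes N. \<Sum>j\<in>nbhd N a i. a i j * tau i j)"
  have "omega_gamma N K c a tau g y \<gamma> = (s * (\<Sum>i\<in>nodes N. c i * g i (y i))) / (s * (C + K * Z))"
    unfolding omega_gamma_def C_def Z_def using \<gamma>
    by (simp add: sum_distrib_left mult.assoc distrib_left mult.left_commute)
  thus ?thesis unfolding omega_bal_def C_def Z_def using s by simp
qed

end

locale delayed_network_left_eigenvector = delayed_network +
  fixes \<gamma> :: "nat \<Rightarrow> real"
  assumes gamma_nonneg: "\<forall>i\<in>nodes N. \<gamma> i \<ge> 0"
    and gamma_norm: "sqrt (\<Sum>i\<in>nodes N. (\<gamma> i)\<^sup>2) = 1"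
    and gamma_left: "\<forall>j\<in>nodes N. (\<Sum>i\<in>nodes N. \<gamma> i * laplacian N a i j) = 0"
begin

lemma gamma_null: "laplacian_left_null N a \<gamma>"
  using gamma_left unfolding laplacian_left_null_def .

lemma gamma_nonzero: "\<exists>p\<in>nodes N. 0 < \<gamma> p"
proof (rule ccontr)
  assume "\<not> (\<exists>p\<in>nodes N. 0 < \<gamma> p)"
  hence "\<forall>p\<in>nodes N. \<gamma> p = 0" using gamma_nonneg by force
  thus False using gamma_norm by simp
qed

lemma nodes_nonempty: "nodes N \<noteq> {}"
  using gamma_nonzero by blast

lemma gamma_pos_if_strongly_connected: "strongly_connected N a \<Longrightarrow> \<forall>i\<in>nodes N. 0 < \<gamma> i"
  using gamma_nonzero laplacian_left_null_pos[OF _ gamma_null gamma_nonneg a_nonneg] by blast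

text \<open>Weighting by \<open>\<gamma>\<close> annihilates the Laplacian terms of a block that exchanges no edges with
  the rest of the graph.\<close>

lemma block_frequency:
  assumes Q: "Q \<subseteq> nodes N"
    and out: "\<forall>i\<in>Q. \<forall>j\<in>nodes N - Q. a i j = 0" and into: "\<forall>i\<in>nodes N - Q. \<forall>j\<in>Q. a i j = 0"
    and eq: "\<forall>i\<in>Q. \<omega> = q i + K / c i * (\<Sum>j\<in>nbhd N a i. a i j * (b j - b i - \<omega> * tau i j))"
  shows "\<omega> * ((\<Sum>i\<in>Q. \<gamma> i * c i) + K * (\<Sum>i\<in>Q. \<Sum>j\<in>nbhd N a i. \<gamma> i * a i j * tau i j))
           = (\<Sum>i\<in>Q. \<gamma> i * c i * q i)"
proof -
  define Y where "Y i = (\<Sum>j\<in>nbhd N a i. a i j * (b i - b j))" for i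
  define Z where "Z i = (\<Sum>j\<in>nbhd N a i. a i j * tau i j)" for i
  have "\<gamma> i * c i * \<omega> = \<gamma> i * c i * q i - K * (\<gamma> i * Y i) - K * \<omega> * (\<gamma> i * Z i)"
    if i: "i \<in> Q" for i
  proof -
    have ci: "c i \<noteq> 0" using c_pos i Q by force
    have "\<omega> = q i + K / c i * (- Y i - \<omega> * Z i)"
      using eq i unfolding Y_def Z_def nbhd_sum_affine by blast
    hence "c i * \<omega> = c i * (q i + K / c i * (- Y i - \<omega> * Z i))" by simp
    also have "\<dots> = c i * q i + K * (- Y i - \<omega> * Z i)"
      using ci by (simp add: field_simps)
    finally have "\<gamma> i * (c i * \<omega>) = \<gamma> i * (c i * q i + K * (- Y i - \<omega> * Z i))" by simp
    thus ?thesis by (simp add: algebra_simps)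
  qed
  hence "(\<Sum>i\<in>Q. \<gamma> i * c i) * \<omega>
      = (\<Sum>i\<in>Q. \<gamma> i * c i * q i) - K * (\<Sum>i\<in>Q. \<gamma> i * Y i) - K * \<omega> * (\<Sum>i\<in>Q. \<gamma> i * Z i)"
    by (simp add: sum_distrib_right sum_subtractf sum_distrib_left[symmetric])
  moreover have "(\<Sum>i\<in>Q. \<gamma> i * Y i) = 0"
    unfolding Y_def by (rule laplacian_left_null_block_sum[OF Q gamma_null out into])
  moreover have "(\<Sum>i\<in>Q. \<Sum>j\<in>nbhd N a i. \<gamma> i * a i j * tau i j) = (\<Sum>i\<in>Q. \<gamma> i * Z i)"
    unfolding Z_def by (simp add: sum_distrib_left mult.assoc)
  ultimately show ?thesis by (simp add: algebra_simps)
qed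

lemma affine_solution_exists:
  fixes g :: "nat \<Rightarrow> real \<Rightarrow> real" and y :: "nat \<Rightarrow> real"
  assumes sc: "strongly_connected N a"
  defines "\<omega> \<equiv> omega_gamma N K c a tau g y \<gamma>"
  shows "\<exists>b. \<forall>i\<in>nodes N. g i (y i) + K / c i * (\<Sum>j\<in>nbhd N a i. a i j * (b j - b i - \<omega> * tau i j)) = \<omega>"
proof -
  have pos: "\<forall>i\<in>nodes N. 0 < \<gamma> i" by (rule gamma_pos_if_strongly_connected[OF sc])
  define Z where "Z i = (\<Sum>j\<in>nbhd N a i. a i j * tau i j)" for i
  define r where "r i = c i * (g i (y i) - \<omega>) / K - \<omega> * Z i" for i
  define A1 where "A1 = (\<Sum>i\<in>nodes N. \<gamma> i * c i)"
  define A2 where "A2 = (\<Sum>i\<in>nodes N. \<gamma> i * Z i)"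
  define A3 where "A3 = (\<Sum>i\<in>nodes N. \<gamma> i * c i * g i (y i))"
  have A2_eq: "(\<Sum>i\<in>nodes N. \<Sum>j\<in>nbhd N a i. \<gamma> i * a i j * tau i j) = A2"
    unfolding A2_def Z_def by (simp add: sum_distrib_left mult.assoc)
  have "0 < A1 + K * A2"
    using block_weight_pos[OF pos order_refl nodes_nonempty] unfolding A1_def A2_eq .
  hence \<omega>_eq: "A3 = \<omega> * (A1 + K * A2)"
    unfolding \<omega>_def omega_gamma_def A1_def[symmetric] A2_eq A3_def[symmetric] by simp
  have "K * (\<Sum>i\<in>nodes N. \<gamma> i * r i)
      = (\<Sum>i\<in>nodes N. \<gamma> i * c i * g i (y i) - \<omega> * (\<gamma> i * c i) - K * \<omega> * (\<gamma> i * Z i))"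
    unfolding sum_distrib_left r_def using K_pos by (intro sum.cong refl) (simp add: field_simps)
  also have "\<dots> = A3 - \<omega> * A1 - K * \<omega> * A2"
    unfolding A1_def A2_def A3_def by (simp add: sum_subtractf sum_distrib_left)
  also have "\<dots> = 0" unfolding \<omega>_eq by (simp add: algebra_simps)
  finally have "(\<Sum>i\<in>nodes N. \<gamma> i * r i) = 0" using K_pos by simp
  then obtain b where b: "\<forall>i\<in>nodes N. (\<Sum>j\<in>nodes N. laplacian N a i j * b j) = r i"
    using laplacian_solvable[OF sc gamma_null pos a_nonneg] by blast
  have "g i (y i) + K / c i * (\<Sum>j\<in>nbhd N a i. a i j * (b j - b i - \<omega> * tau i j)) = \<omega>"
    if i: "i \<in> nodes N" for i
  proof -
    have "(\<Sum>j\<in>nbhd N a i. a i j * (b i - b j)) = r i"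
      using b i laplacian_mult_vec[OF i, of a b] by simp
    hence "(\<Sum>j\<in>nbhd N a i. a i j * (b j - b i - \<omega> * tau i j)) = - c i * (g i (y i) - \<omega>) / K"
      unfolding nbhd_sum_affine r_def Z_def by simp
    moreover have "c i \<noteq> 0" using c_pos i by force
    ultimately show ?thesis using K_pos by (simp add: field_simps)
  qed
  thus ?thesis by blast
qed

lemma sync_if_strongly_connected:
  "strongly_connected N a \<Longrightarrow> globally_synchronizes_with N K c a tau g y (omega_gamma N K c a tau g y \<gamma>)"
  using affine_solution_exists synchronizes_if_affine_solution by blast

lemma strongly_connected_if_sync:
  assumes pos: "\<forall>i\<in>nodes N. 0 < \<gamma> i"
    and sync: "\<forall>g y. globally_synchronizes_with N K c a tau g y (omega_gamma N K c a tau g y \<gamma>)"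
  shows "strongly_connected N a"
proof (rule ccontr)
  assume "\<not> strongly_connected N a"
  then obtain S where S: "S \<subseteq> nodes N" "S \<noteq> {}" "S \<noteq> nodes N"
    and out: "\<forall>i\<in>S. \<forall>j\<in>nodes N - S. a i j = 0"
    using closed_set_if_not_strongly_connected a_nonneg by blast
  have into: "\<forall>i\<in>nodes N - S. \<forall>j\<in>S. a i j = 0"
    by (rule laplacian_left_null_closed_set[OF S(1) out gamma_null pos a_nonneg])
  define g0 where "g0 i = (\<lambda>_::real. if i \<in> S then 0 else 1 :: real)" for i
  define \<omega> where "\<omega> = omega_gamma N K c a tau g0 (\<lambda>_. 0) \<gamma>"
  obtain \<phi> x where "is_solution N K c a tau g0 (\<lambda>_. 0) \<phi> x"
    "\<forall>i\<in>nodes N. \<forall>t>0. (x i has_real_derivative \<omega>) (at t)"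
    using sync unfolding globally_synchronizes_with_def \<omega>_def by blast
  then obtain b where b: "\<forall>i\<in>nodes N. \<omega> = g0 i 0 + K / c i * (\<Sum>j\<in>nbhd N a i. a i j * (b j - b i - \<omega> * tau i j))"
    using synchronous_solution_affine by blast
  have C: "nodes N - S \<subseteq> nodes N" "nodes N - S \<noteq> {}" using S by auto
  have "\<omega> * ((\<Sum>i\<in>S. \<gamma> i * c i) + K * (\<Sum>i\<in>S. \<Sum>j\<in>nbhd N a i. \<gamma> i * a i j * tau i j))
      = (\<Sum>i\<in>S. \<gamma> i * c i * g0 i 0)"
    using b S(1) by (intro block_frequency[OF S(1) out into]) auto
  moreover have "0 < (\<Sum>i\<in>S. \<gamma> i * c i) + K * (\<Sum>i\<in>S. \<Sum>j\<in>nbhd N a i. \<gamma> i * a i j * tau i j)"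
    using pos S(1) by (intro block_weight_pos[OF _ S(1,2)]) auto
  moreover have "(\<Sum>i\<in>S. \<gamma> i * c i * g0 i 0) = 0" by (simp add: g0_def)
  ultimately have "\<omega> = 0" by simp
  moreover have "\<omega> * ((\<Sum>i\<in>nodes N - S. \<gamma> i * c i)
        + K * (\<Sum>i\<in>nodes N - S. \<Sum>j\<in>nbhd N a i. \<gamma> i * a i j * tau i j))
      = (\<Sum>i\<in>nodes N - S. \<gamma> i * c i * g0 i 0)"
    using b out into S(1) by (intro block_frequency[OF C(1)]) (auto simp: double_diff)
  moreover have "0 < (\<Sum>i\<in>nodes N - S. \<gamma> i * c i * g0 i 0)"
    using C pos c_pos by (intro sum_pos) (auto simp: g0_def)
  ultimately show False by simp
qed

lemma gamma_const_if_omega_bal: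
  assumes pos: "\<forall>i\<in>nodes N. 0 < \<gamma> i"
    and eq: "\<forall>g y. omega_bal N K c a tau g y = omega_gamma N K c a tau g y \<gamma>"
  shows "\<exists>s. \<forall>i\<in>nodes N. \<gamma> i = s"
proof -
  define W1 where "W1 = (\<Sum>i\<in>nodes N. c i) + K * (\<Sum>i\<in>nodes N. \<Sum>j\<in>nbhd N a i. a i j * tau i j)"
  define W\<gamma> where "W\<gamma> = (\<Sum>i\<in>nodes N. \<gamma> i * c i) + K * (\<Sum>i\<in>nodes N. \<Sum>j\<in>nbhd N a i. \<gamma> i * a i j * tau i j)"
  have W1: "0 < W1" unfolding W1_def using block_weight_pos[of "nodes N" "\<lambda>_. 1"] nodes_nonempty by simp
  have W\<gamma>: "0 < W\<gamma>" unfolding W\<gamma>_def using block_weight_pos[OF pos order_refl nodes_nonempty] .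
  have "\<gamma> p = W\<gamma> / W1" if p: "p \<in> nodes N" for p
  proof -
    define g1 where "g1 i = (\<lambda>_::real. if i = p then 1 / c i else 0)" for i
    have "(\<Sum>i\<in>nodes N. c i * g1 i 0) = (\<Sum>i\<in>nodes N. if i = p then 1 else 0)"
      using c_pos by (intro sum.cong) (auto simp: g1_def)
    moreover have "(\<Sum>i\<in>nodes N. \<gamma> i * c i * g1 i 0) = (\<Sum>i\<in>nodes N. if i = p then \<gamma> p else 0)"
      using c_pos by (intro sum.cong) (auto simp: g1_def)
    ultimately have "1 / W1 = \<gamma> p / W\<gamma>"
      using eq[rule_format, of g1 "\<lambda>_. 0"] p
      unfolding omega_bal_def omega_gamma_def W1_def W\<gamma>_def by simp
    thus ?thesis using W1 W\<gamma> by (simp add: field_simps)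
  qed
  thus ?thesis by blast
qed

lemma sync_bal_iff_balanced:
  assumes sc: "strongly_connected N a"
  shows "(\<forall>g y. globally_synchronizes_with N K c a tau g y (omega_bal N K c a tau g y)) \<longleftrightarrow> balanced N a"
proof -
  have pos: "\<forall>i\<in>nodes N. 0 < \<gamma> i" by (rule gamma_pos_if_strongly_connected[OF sc])
  have "(\<forall>g y. globally_synchronizes_with N K c a tau g y (omega_bal N K c a tau g y))
      \<longleftrightarrow> (\<forall>g y. omega_bal N K c a tau g y = omega_gamma N K c a tau g y \<gamma>)"
    using sync_if_strongly_connected[OF sc] sync_frequency_unique[OF nodes_nonempty] by metis
  also have "\<dots> \<longleftrightarrow> (\<exists>s>0. \<forall>i\<in>nodes N. \<gamma> i = s)"
  proof
    assume "\<forall>g y. omega_bal N K c a tau g y = omega_gamma N K c a tau g y \<gamma>"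
    then obtain s where "\<forall>i\<in>nodes N. \<gamma> i = s" using gamma_const_if_omega_bal[OF pos] by blast
    thus "\<exists>s>0. \<forall>i\<in>nodes N. \<gamma> i = s" using pos nodes_nonempty by force
  qed (use omega_gamma_const in metis)
  also have "\<dots> \<longleftrightarrow> laplacian_left_null N a (\<lambda>_. 1)"
  proof
    assume "\<exists>s>0. \<forall>i\<in>nodes N. \<gamma> i = s"
    then obtain s where "0 < s" "\<forall>i\<in>nodes N. \<gamma> i = s" by blast
    thus "laplacian_left_null N a (\<lambda>_. 1)"
      using gamma_null unfolding laplacian_left_null_def by (simp add: sum_distrib_left[symmetric])
  next
    assume one: "laplacian_left_null N a (\<lambda>_. 1)"
    have "\<exists>s. \<forall>i\<in>nodes N. \<gamma> i = s * 1"
      by (rule laplacian_left_null_proportional[OF sc gamma_null one _ a_nonneg nodes_nonempty]) simp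
    then obtain s where "\<forall>i\<in>nodes N. \<gamma> i = s * 1" by blast
    thus "\<exists>s>0. \<forall>i\<in>nodes N. \<gamma> i = s" using pos nodes_nonempty by force
  qed
  also have "\<dots> \<longleftrightarrow> balanced N a" by (rule balanced_iff_laplacian_left_null_one[symmetric])
  finally show ?thesis .
qed

end

theorem corollary1:
  fixes N :: nat and K :: real and c :: "nat \<Rightarrow> real"
    and a tau :: "nat \<Rightarrow> nat \<Rightarrow> real" and \<gamma> :: "nat \<Rightarrow> real"
  assumes a1K: "K > 0"
    and a1c: "\<forall>i\<in>nodes N. c i > 0"
    and anonneg: "\<forall>i\<in>nodes N. \<forall>j\<in>nodes N. i \<noteq> j \<longrightarrow> a i j \<ge> 0"
    and a2: "\<forall>i\<in>nodes N. \<forall>j\<in>nodes N. i \<noteq> j \<longrightarrow> tau i j \<ge> 0"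
    and gamma_nonneg: "\<forall>i\<in>nodes N. \<gamma> i \<ge> 0"
    and gamma_norm: "sqrt (\<Sum>i\<in>nodes N. (\<gamma> i)\<^sup>2) = 1"
    and gamma_left: "\<forall>j\<in>nodes N. (\<Sum>i\<in>nodes N. \<gamma> i * laplacian N a i j) = 0"
  shows "(((\<forall>g y. globally_synchronizes_with N K c a tau g y (omega_gamma N K c a tau g y \<gamma>))
            \<and> (\<forall>i\<in>nodes N. \<gamma> i > 0))
          \<longleftrightarrow> strongly_connected N a)
       \<and> (strongly_connected N a \<longrightarrow>
          ((\<forall>g y. globally_synchronizes_with N K c a tau g y (omega_bal N K c a tau g y))
           \<longleftrightarrow> balanced N a))"
proof -
  interpret delayed_network_left_eigenvector N K c a tau \<gamma>
    using assms by unfold_locales auto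
  show ?thesis
    using strongly_connected_if_sync sync_if_strongly_connected gamma_pos_if_strongly_connected
      sync_bal_iff_balanced
    by blast
qed

end
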